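(* For $A\in C^\alpha(\Sigma,\mathbb R)$, the Aubry set satisfies $$\mathcal A(A)=\bigcap_{F\in\mathcal S(A)} I_F^{-1}\{0\}.$$
   Context: $\Sigma=\{1,\dots,d\}^{\mathbb N}$, $T$ the left shift, metric $d(\omega,\nu)=\lambda^N$, $N=\min\{k:\omega_k\ne\nu_k\}$, $0<\lambda<1$. $m_A=\max\{\int A\,d\mu:\mu\ T\text{-invariant}\}$. A calibrated sub-action for $A$ is a continuous $F$ with $F(x)=\max_{Ty=x}[F(y)+A(y)-m_A]$; $\mathcal S(A)$ is the set of $\alpha$-Hölder calibrated sub-actions. $R_F(x)=F(Tx)-F(x)-A(x)+m_A\ge0$ and $I_F(x)=\sum_{i\ge0}R_F(T^ix)\in[0,\infty]$. Mañé potential $S_A(x,y)=\lim_{\epsilon\to0}\sup\{\sum_{i=0}^{n-1}[A(T^iz)-m_A]:n\in\mathbb N,\ T^nz=y,\ d(z,x)<\epsilon\}$; Aubry set $\mathcal A(A)=\{x:S_A(x,x)=0\}$. *)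

theory Defs
  imports "HOL-Probability.Probability"
begin

text \<open>Sequences are functions nat => nat; coordinate omega_k (k >= 1) of the paper
  is stored at index k - 1.\<close>

definition SigmaS :: "nat \<Rightarrow> (nat \<Rightarrow> nat) set" where
  "SigmaS d = {\<omega>. \<forall>k. \<omega> k \<in> {1..d}}"

definition shift :: "(nat \<Rightarrow> nat) \<Rightarrow> (nat \<Rightarrow> nat)" where
  "shift \<omega> = (\<lambda>k. \<omega> (Suc k))"

definition distS :: "real \<Rightarrow> (nat \<Rightarrow> nat) \<Rightarrow> (nat \<Rightarrow> nat) \<Rightarrow> real" where
  "distS lam \<omega> \<nu> = (if \<omega> = \<nu> then 0 else lam ^ Suc (LEAST k. \<omega> k \<noteq> \<nu> k))"

definition opensS :: "nat \<Rightarrow> real \<Rightarrow> (nat \<Rightarrow> nat) set set" where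
  "opensS d lam = {U. U \<subseteq> SigmaS d \<and>
     (\<forall>x\<in>U. \<exists>e>0. \<forall>y\<in>SigmaS d. distS lam x y < e \<longrightarrow> y \<in> U)}"

definition borelS :: "nat \<Rightarrow> real \<Rightarrow> (nat \<Rightarrow> nat) measure" where
  "borelS d lam = sigma (SigmaS d) (opensS d lam)"

definition invariant_measures :: "nat \<Rightarrow> real \<Rightarrow> (nat \<Rightarrow> nat) measure set" where
  "invariant_measures d lam = {\<mu>. sets \<mu> = sets (borelS d lam) \<and> prob_space \<mu> \<and>
      shift \<in> measurable \<mu> \<mu> \<and>
      (\<forall>B\<in>sets \<mu>. emeasure \<mu> (shift -` B \<inter> space \<mu>) = emeasure \<mu> B)}"

text \<open>m_A = max of the integrals over invariant measures (written as Sup).\<close>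
definition mA :: "nat \<Rightarrow> real \<Rightarrow> ((nat \<Rightarrow> nat) \<Rightarrow> real) \<Rightarrow> real" where
  "mA d lam A = Sup ((\<lambda>\<mu>. integral\<^sup>L \<mu> A) ` invariant_measures d lam)"

definition continuousS :: "nat \<Rightarrow> real \<Rightarrow> ((nat \<Rightarrow> nat) \<Rightarrow> real) \<Rightarrow> bool" where
  "continuousS d lam F \<longleftrightarrow> (\<forall>x\<in>SigmaS d. \<forall>e>0. \<exists>\<delta>>0. \<forall>y\<in>SigmaS d.
      distS lam x y < \<delta> \<longrightarrow> \<bar>F y - F x\<bar> < e)"

definition holderS :: "nat \<Rightarrow> real \<Rightarrow> real \<Rightarrow> ((nat \<Rightarrow> nat) \<Rightarrow> real) \<Rightarrow> bool" where
  "holderS d lam \<alpha> F \<longleftrightarrow> (\<exists>C. \<forall>x\<in>SigmaS d. \<forall>y\<in>SigmaS d.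
      \<bar>F x - F y\<bar> \<le> C * distS lam x y powr \<alpha>)"

definition calibrated_subaction ::
    "nat \<Rightarrow> real \<Rightarrow> ((nat \<Rightarrow> nat) \<Rightarrow> real) \<Rightarrow> ((nat \<Rightarrow> nat) \<Rightarrow> real) \<Rightarrow> bool" where
  "calibrated_subaction d lam A F \<longleftrightarrow> continuousS d lam F \<and>
     (\<forall>x\<in>SigmaS d. F x = Max {F y + A y - mA d lam A | y. y \<in> SigmaS d \<and> shift y = x})"

definition subactions_S ::
    "nat \<Rightarrow> real \<Rightarrow> real \<Rightarrow> ((nat \<Rightarrow> nat) \<Rightarrow> real) \<Rightarrow> ((nat \<Rightarrow> nat) \<Rightarrow> real) set" where
  "subactions_S d lam \<alpha> A = {F. holderS d lam \<alpha> F \<and> calibrated_subaction d lam A F}"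

definition R_F :: "nat \<Rightarrow> real \<Rightarrow> ((nat \<Rightarrow> nat) \<Rightarrow> real) \<Rightarrow> ((nat \<Rightarrow> nat) \<Rightarrow> real)
    \<Rightarrow> (nat \<Rightarrow> nat) \<Rightarrow> real" where
  "R_F d lam A F x = F (shift x) - F x - A x + mA d lam A"

text \<open>I_F(x) in [0,\<infinity>]; R_F >= 0 for sub-actions, so ennreal is faithful.\<close>
definition I_F :: "nat \<Rightarrow> real \<Rightarrow> ((nat \<Rightarrow> nat) \<Rightarrow> real) \<Rightarrow> ((nat \<Rightarrow> nat) \<Rightarrow> real)
    \<Rightarrow> (nat \<Rightarrow> nat) \<Rightarrow> ennreal" where
  "I_F d lam A F x = (\<Sum>i. ennreal (R_F d lam A F ((shift ^^ i) x)))"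

definition mane :: "nat \<Rightarrow> real \<Rightarrow> ((nat \<Rightarrow> nat) \<Rightarrow> real) \<Rightarrow> (nat \<Rightarrow> nat) \<Rightarrow> (nat \<Rightarrow> nat) \<Rightarrow> ereal" where
  "mane d lam A x y = Lim (at_right (0::real)) (\<lambda>\<epsilon>. Sup {ereal (\<Sum>i<n. A ((shift ^^ i) z) - mA d lam A)
      | n z. n \<ge> 1 \<and> z \<in> SigmaS d \<and> (shift ^^ n) z = y \<and> distS lam z x < \<epsilon>})"

definition aubry :: "nat \<Rightarrow> real \<Rightarrow> ((nat \<Rightarrow> nat) \<Rightarrow> real) \<Rightarrow> (nat \<Rightarrow> nat) set" where
  "aubry d lam A = {x\<in>SigmaS d. mane d lam A x x = 0}"

end

theory Submission
  imports Defs
begin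

text \<open>
  Notation: S n z is the Birkhoff sum of the normalised potential A - m_A along
  the first n points of the orbit of z, and R_F = F o shift - F - (A - m_A).
  Since R_F is nonnegative for a sub-action, summing it along an orbit
  telescopes: S n z = F (shift^n z) - F z - (nonnegative sum).

  Inclusion of the Aubry set: for x in the Aubry set there are orbit segments
  that start close to x, return to x and have Birkhoff sum almost 0.  By the
  telescoping identity the values of R_F along such a segment have almost zero
  sum, and since the segment shadows the forward orbit of x, R_F vanishes along
  that orbit, i.e. I_F x = 0.

  Converse: for a base point x0 and a depth K let barrier x0 K y be the limsup,
  as m tends to infinity, of the maximal Birkhoff sum S m z over all z that
  start in the K-cylinder of x0 and satisfy shift^m z = y.  Bounded distortion
  and the variational characterisation of m_A make every such function a
  Hoelder calibrated sub-action (once it is bounded below).  If I_F x0 = 0 for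
  all of them, the Birkhoff sums along x0 are bounded; recurrence of the
  orbit of x0 then yields barrier x0 K x0 >= 0 for every K, which produces the
  returning segments with Birkhoff sum close to 0 needed to show that the Mane
  potential S_A(x0, x0) vanishes.
\<close>

definition agree :: "nat \<Rightarrow> (nat \<Rightarrow> nat) \<Rightarrow> (nat \<Rightarrow> nat) \<Rightarrow> bool" where
  "agree k x y \<longleftrightarrow> (\<forall>i<k. x i = y i)"

definition prepend :: "(nat \<Rightarrow> nat) \<Rightarrow> nat \<Rightarrow> (nat \<Rightarrow> nat) \<Rightarrow> (nat \<Rightarrow> nat)" where
  "prepend w n y = (\<lambda>k. if k < n then w k else y (k - n))"

lemma funpow_shift: "(shift ^^ m) z k = z (k + m)"
  by (induction m arbitrary: z k) (auto simp: shift_def funpow_swap1)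

lemma funpow_shift': "(shift ^^ m) z = (\<lambda>k. z (k + m))"
  using funpow_shift by auto

lemma shift_funpow_add: "(shift ^^ i) ((shift ^^ j) z) = (shift ^^ (i + j)) z"
  by (simp add: funpow_add)

lemma agree_refl[simp]: "agree k x x" by (simp add: agree_def)

lemma agree_sym: "agree k x y \<Longrightarrow> agree k y x" by (auto simp: agree_def)

lemma agree_trans: "agree k x y \<Longrightarrow> agree k y z \<Longrightarrow> agree k x z" by (auto simp: agree_def)

lemma agree_mono: "agree k x y \<Longrightarrow> j \<le> k \<Longrightarrow> agree j x y" by (auto simp: agree_def)

lemma agree_0[simp]: "agree 0 x y" by (simp add: agree_def)

lemma agree_shift: "agree k x y \<Longrightarrow> agree (k - i) ((shift ^^ i) x) ((shift ^^ i) y)"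
  by (auto simp: agree_def funpow_shift)

lemma shift_prepend: "(shift ^^ n) (prepend w n y) = y"
  by (auto simp: prepend_def funpow_shift')

lemma prepend_agree: "agree n (prepend w n y) w"
  by (auto simp: prepend_def agree_def)

lemma prepend_agree2: "agree k y y' \<Longrightarrow> agree (n + k) (prepend w n y) (prepend w n y')"
  by (auto simp: prepend_def agree_def)

lemma prepend_self: "(shift ^^ n) z = y \<Longrightarrow> prepend z n y = z"
proof -
  assume h: "(shift ^^ n) z = y"
  show ?thesis
  proof
    fix k show "prepend z n y k = z k"
    proof (cases "k < n")
      case False
      hence "y (k - n) = z (k - n + n)" using h funpow_shift[of n z "k-n"] by simp
      thus ?thesis using False by (simp add: prepend_def)
    qed (simp add: prepend_def)
  qed
qed

lemma prepend_in: "w \<in> SigmaS d \<Longrightarrow> y \<in> SigmaS d \<Longrightarrow> prepend w n y \<in> SigmaS d"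
  by (auto simp: prepend_def SigmaS_def)

lemma shift_in: "x \<in> SigmaS d \<Longrightarrow> (shift ^^ n) x \<in> SigmaS d"
  by (auto simp: SigmaS_def funpow_shift)

lemma shift_in1: "x \<in> SigmaS d \<Longrightarrow> shift x \<in> SigmaS d"
  by (auto simp: SigmaS_def shift_def)

lemma agree_prepend_shift: "agree k ((shift ^^ n) z) y \<Longrightarrow> agree (n + k) z (prepend z n y)"
  unfolding agree_def prepend_def
proof (intro allI impI)
  fix i assume h: "\<forall>i<k. (shift ^^ n) z i = y i" and i: "i < n + k"
  show "z i = (if i < n then z i else y (i - n))"
  proof (cases "i < n")
    case False
    hence "(shift ^^ n) z (i - n) = y (i - n)" using h i by auto
    thus ?thesis using False by (simp add: funpow_shift)
  qed simp
qed

lemma distS_lt_pow: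
  assumes "0 < lam" "lam < 1"
  shows "distS lam x y < lam ^ k \<longleftrightarrow> agree k x y"
proof (cases "x = y")
  case True thus ?thesis using assms by (simp add: distS_def)
next
  case False
  define L where "L = (LEAST i. x i \<noteq> y i)"
  have ex: "\<exists>i. x i \<noteq> y i" using False by auto
  have xL: "x L \<noteq> y L" unfolding L_def by (rule LeastI_ex[OF ex])
  have mn: "\<And>i. i < L \<Longrightarrow> x i = y i" unfolding L_def using not_less_Least by blast
  have "distS lam x y = lam ^ Suc L" using False by (simp add: distS_def L_def)
  also have "\<dots> < lam ^ k \<longleftrightarrow> k < Suc L" using assms power_strict_decreasing_iff[of lam "Suc L" k] by simp
  also have "k < Suc L \<longleftrightarrow> agree k x y"
    using xL mn by (auto simp: agree_def) (meson not_less_eq)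
  finally show ?thesis .
qed

lemma distS_nonneg: "0 < lam \<Longrightarrow> 0 \<le> distS lam x y"
  by (simp add: distS_def)

lemma distS_eq:
  assumes "x \<noteq> y"
  shows "\<exists>L. distS lam x y = lam ^ Suc L \<and> agree L x y"
proof -
  define L where "L = (LEAST i. x i \<noteq> y i)"
  have mn: "\<And>i. i < L \<Longrightarrow> x i = y i" unfolding L_def using not_less_Least by blast
  show ?thesis using assms by (intro exI[of _ L]) (auto simp: distS_def L_def[symmetric] agree_def mn)
qed

lemma preimages_eq:
  assumes "y \<in> SigmaS d"
  shows "{z. z \<in> SigmaS d \<and> shift z = y} = (\<lambda>a. prepend (\<lambda>_. a) 1 y) ` {1..d}"
proof (intro set_eqI iffI)
  fix z assume z: "z \<in> {z. z \<in> SigmaS d \<and> shift z = y}"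
  have "z = prepend (\<lambda>_. z 0) 1 y"
  proof
    fix k show "z k = prepend (\<lambda>_. z 0) 1 y k"
      using z by (cases k) (auto simp: prepend_def shift_def)
  qed
  moreover have "z 0 \<in> {1..d}" using z by (auto simp: SigmaS_def)
  ultimately show "z \<in> (\<lambda>a. prepend (\<lambda>_. a) 1 y) ` {1..d}" by blast
next
  fix z assume "z \<in> (\<lambda>a. prepend (\<lambda>_. a) 1 y) ` {1..d}"
  then obtain a where a: "a \<in> {1..d}" "z = prepend (\<lambda>_. a) 1 y" by auto
  thus "z \<in> {z. z \<in> SigmaS d \<and> shift z = y}"
    using assms by (auto simp: prepend_def shift_def SigmaS_def)
qed

lemma preimages_finite: "y \<in> SigmaS d \<Longrightarrow> finite {z. z \<in> SigmaS d \<and> shift z = y}"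
  by (simp add: preimages_eq)

lemma preimages_ne: "y \<in> SigmaS d \<Longrightarrow> 1 \<le> d \<Longrightarrow> {z. z \<in> SigmaS d \<and> shift z = y} \<noteq> {}"
  by (simp add: preimages_eq)

lemma image_set_eq: "{f z | z. z \<in> SigmaS d \<and> shift z = y} = f ` {z. z \<in> SigmaS d \<and> shift z = y}"
  by auto

definition paths :: "nat \<Rightarrow> (nat \<Rightarrow> nat) \<Rightarrow> nat \<Rightarrow> nat \<Rightarrow> (nat \<Rightarrow> nat) \<Rightarrow> (nat \<Rightarrow> nat) set" where
  "paths d x0 K m y = {z \<in> SigmaS d. agree K z x0 \<and> (shift ^^ m) z = y}"

lemma paths_finite: "finite (paths d x0 K m y)"
proof -
  have "paths d x0 K m y \<subseteq> (\<lambda>w. prepend w m y) ` (PiE {..<m} (\<lambda>_. {1..d}))"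
  proof
    fix z assume z: "z \<in> paths d x0 K m y"
    hence "z = prepend z m y"
      using prepend_self[of m z y] by (auto simp: paths_def)
    also have "\<dots> = prepend (restrict z {..<m}) m y" by (auto simp: prepend_def)
    finally have "z = prepend (restrict z {..<m}) m y" .
    moreover have "restrict z {..<m} \<in> PiE {..<m} (\<lambda>_. {1..d})"
      using z by (auto simp: paths_def SigmaS_def)
    ultimately show "z \<in> (\<lambda>w. prepend w m y) ` (PiE {..<m} (\<lambda>_. {1..d}))" by blast
  qed
  thus ?thesis by (rule finite_subset) (auto intro: finite_PiE)
qed

lemma paths_ne: "x0 \<in> SigmaS d \<Longrightarrow> y \<in> SigmaS d \<Longrightarrow> K \<le> m \<Longrightarrow> prepend x0 m y \<in> paths d x0 K m y"
  using prepend_agree[of m x0 y] by (auto simp: paths_def prepend_in shift_prepend intro: agree_mono)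

definition periodize :: "(nat \<Rightarrow> nat) \<Rightarrow> nat \<Rightarrow> nat \<Rightarrow> nat" where
  "periodize z m = (\<lambda>k. z (k mod m))"

definition ones :: "nat \<Rightarrow> nat" where
  "ones = (\<lambda>_. 1)"

lemma ones_in: "1 \<le> d \<Longrightarrow> ones \<in> SigmaS d"
  by (simp add: ones_def SigmaS_def)

lemma shift_ones: "shift ones = ones" by (simp add: shift_def ones_def)

lemma agree_periodic:
  assumes n: "1 \<le> n" and h: "agree (K - n) ((shift ^^ n) x) x"
  shows "agree (K - j) ((shift ^^ j) x) ((shift ^^ (j mod n)) x)"
proof (induction j rule: less_induct)
  case (less j)
  show ?case
  proof (cases "j < n")
    case True thus ?thesis by simp
  next
    case False
    have e1: "(shift ^^ j) x = (shift ^^ (j - n)) ((shift ^^ n) x)"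
      using False by (simp add: shift_funpow_add)
    have a1: "agree (K - n - (j - n)) ((shift ^^ j) x) ((shift ^^ (j - n)) x)"
      unfolding e1 by (rule agree_shift[OF h])
    have kk: "K - n - (j - n) = K - j" using False by simp
    have a2: "agree (K - (j - n)) ((shift ^^ (j - n)) x) ((shift ^^ ((j - n) mod n)) x)"
      using less.IH[of "j - n"] False n by simp
    have "(j - n) mod n = j mod n" using False by (simp add: le_mod_geq)
    hence a2': "agree (K - j) ((shift ^^ (j - n)) x) ((shift ^^ (j mod n)) x)"
      using agree_mono[OF a2] by simp
    show ?thesis using agree_trans[OF a1[unfolded kk] a2'] .
  qed
qed

lemma return_orbit_shadows:
  assumes n: "1 \<le> n" and ret: "(shift ^^ n) z = x" and ag: "agree (k + j + 1) z x"
  obtains i where "i < n" "agree (Suc k) ((shift ^^ i) z) ((shift ^^ j) x)"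
proof (cases "j < n")
  case True
  have "agree (k + j + 1 - j) ((shift ^^ j) z) ((shift ^^ j) x)" by (rule agree_shift[OF ag])
  thus ?thesis using that True by simp
next
  case False
  let ?K = "k + j + 1"
  have h: "agree (?K - n) ((shift ^^ n) x) x"
    using agree_shift[OF agree_sym[OF ag], of n] ret by simp
  have a1: "agree (?K - j) ((shift ^^ j) x) ((shift ^^ (j mod n)) x)"
    by (rule agree_periodic[OF n h])
  have "agree (?K - j mod n) ((shift ^^ (j mod n)) x) ((shift ^^ (j mod n)) z)"
    by (rule agree_shift[OF agree_sym[OF ag]])
  moreover have "?K - j \<le> ?K - j mod n" by (rule diff_le_mono2) simp
  ultimately have a2: "agree (?K - j) ((shift ^^ (j mod n)) x) ((shift ^^ (j mod n)) z)"
    by (rule agree_mono)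
  have "agree (Suc k) ((shift ^^ (j mod n)) z) ((shift ^^ j) x)"
    using agree_sym[OF agree_trans[OF a1 a2]] by simp
  moreover have "j mod n < n" using n by simp
  ultimately show ?thesis using that by blast
qed

text \<open>Pigeonhole: some block of k consecutive symbols of x recurs infinitely often.\<close>

lemma recurrent_block:
  assumes x: "x \<in> SigmaS d"
  obtains n1 where "infinite {m. agree k ((shift ^^ m) x) ((shift ^^ n1) x)}"
proof -
  define f where "f n = map (\<lambda>i. x (n + i)) [0..<k]" for n
  have "range f \<subseteq> {xs. set xs \<subseteq> {1..d} \<and> length xs = k}"
    using x by (auto simp: f_def SigmaS_def)
  hence "finite (range f)" by (rule finite_subset) (rule finite_lists_length_eq, simp)
  then obtain n1 where inf: "infinite (f -` {f n1})" by (rule inf_img_fin_domE) auto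
  have "f -` {f n1} \<subseteq> {m. agree k ((shift ^^ m) x) ((shift ^^ n1) x)}"
    by (auto simp: f_def agree_def funpow_shift map_eq_conv add.commute)
  thus ?thesis using inf that finite_subset by blast
qed

lemma powr_pow_swap: "0 < (lam::real) \<Longrightarrow> (lam ^ k) powr a = (lam powr a) ^ k"
proof -
  assume l: "0 < lam"
  have "(lam ^ k) powr a = (lam powr real k) powr a" using l by (simp add: powr_realpow)
  also have "\<dots> = lam powr (real k * a)" by (simp add: powr_powr)
  also have "\<dots> = (lam powr a) ^ k" using l by (simp add: powr_power)
  finally show ?thesis .
qed

lemma modulus_of_holder:
  assumes "0 < lam" "lam < 1" "0 < \<alpha>" "holderS d lam \<alpha> g"
  shows "\<exists>C\<ge>0. \<forall>x\<in>SigmaS d. \<forall>y\<in>SigmaS d. \<forall>k. agree k x y \<longrightarrow> \<bar>g x - g y\<bar> \<le> C * (lam powr \<alpha>) ^ k"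
proof -
  obtain C where C: "\<forall>x\<in>SigmaS d. \<forall>y\<in>SigmaS d. \<bar>g x - g y\<bar> \<le> C * distS lam x y powr \<alpha>"
    using assms(4) by (auto simp: holderS_def)
  show ?thesis
  proof (intro exI[of _ "\<bar>C\<bar>"] conjI ballI allI impI)
    fix x y k assume xy: "x \<in> SigmaS d" "y \<in> SigmaS d" and ag: "agree k x y"
    have dl: "distS lam x y < lam ^ k" using distS_lt_pow[OF assms(1,2)] ag by simp
    have dn: "0 \<le> distS lam x y" using assms(1) by (rule distS_nonneg)
    have "\<bar>g x - g y\<bar> \<le> C * distS lam x y powr \<alpha>" using C xy by auto
    also have "\<dots> \<le> \<bar>C\<bar> * distS lam x y powr \<alpha>" by (intro mult_right_mono) auto
    also have "\<dots> \<le> \<bar>C\<bar> * (lam ^ k) powr \<alpha>"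
      using dl dn assms(3) by (intro mult_left_mono powr_mono2) auto
    also have "\<dots> = \<bar>C\<bar> * (lam powr \<alpha>) ^ k" using assms(1) by (simp add: powr_pow_swap)
    finally show "\<bar>g x - g y\<bar> \<le> \<bar>C\<bar> * (lam powr \<alpha>) ^ k" .
  qed simp
qed

lemma holder_of_modulus:
  assumes "0 < lam" "lam < 1" "0 < \<alpha>" "0 \<le> C"
    and M: "\<And>x y k. x\<in>SigmaS d \<Longrightarrow> y\<in>SigmaS d \<Longrightarrow> agree k x y \<Longrightarrow> \<bar>g x - g y\<bar> \<le> C * (lam powr \<alpha>) ^ k"
  shows "holderS d lam \<alpha> g"
  unfolding holderS_def
proof (intro exI[of _ "C / (lam powr \<alpha>)"] ballI)
  fix x y assume xy: "x \<in> SigmaS d" "y \<in> SigmaS d"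
  have q0: "0 < lam powr \<alpha>" using assms(1) by simp
  show "\<bar>g x - g y\<bar> \<le> C / lam powr \<alpha> * distS lam x y powr \<alpha>"
  proof (cases "x = y")
    case False
    then obtain L where L: "distS lam x y = lam ^ Suc L" "agree L x y" using distS_eq by blast
    have "\<bar>g x - g y\<bar> \<le> C * (lam powr \<alpha>) ^ L" using M xy L by auto
    also have "\<dots> = C / lam powr \<alpha> * (lam powr \<alpha>) ^ Suc L" using q0 by simp
    also have "\<dots> = C / lam powr \<alpha> * distS lam x y powr \<alpha>"
      using L(1) assms(1) by (simp add: powr_pow_swap del: power_Suc)
    finally show ?thesis .
  qed (simp add: distS_def)
qed

lemma small_pow: "0 \<le> (C::real) \<Longrightarrow> 0 \<le> q \<Longrightarrow> q < 1 \<Longrightarrow> 0 < e \<Longrightarrow> \<exists>k. C * q ^ k < e"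
proof -
  assume h: "0 \<le> C" "0 \<le> q" "q < 1" "0 < e"
  obtain k where k: "q ^ k < e / (C + 1)" using real_arch_pow_inv[of "e/(C+1)" q] h by auto
  have "C * q ^ k \<le> (C + 1) * q ^ k" using h by (intro mult_right_mono) auto
  also have "\<dots> < (C + 1) * (e / (C + 1))" using k h by (intro mult_strict_left_mono) auto
  also have "\<dots> = e" using h by simp
  finally show ?thesis by blast
qed

lemma continuous_of_modulus:
  assumes "0 < lam" "lam < 1" "0 < \<alpha>" "0 \<le> C"
    and M: "\<And>x y k. x\<in>SigmaS d \<Longrightarrow> y\<in>SigmaS d \<Longrightarrow> agree k x y \<Longrightarrow> \<bar>g x - g y\<bar> \<le> C * (lam powr \<alpha>) ^ k"
  shows "continuousS d lam g"
  unfolding continuousS_def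
proof (intro ballI allI impI)
  fix x e assume x: "x \<in> SigmaS d" and e: "(0::real) < e"
  have q: "0 \<le> lam powr \<alpha>" "lam powr \<alpha> < 1" using assms(1-3) powr01_less_one by auto
  obtain k where k: "C * (lam powr \<alpha>) ^ k < e" using small_pow[OF assms(4) q e] by blast
  show "\<exists>\<delta>>0. \<forall>y\<in>SigmaS d. distS lam x y < \<delta> \<longrightarrow> \<bar>g y - g x\<bar> < e"
  proof (intro exI[of _ "lam ^ k"] conjI ballI impI)
    show "0 < lam ^ k" using assms(1) by simp
    fix y assume y: "y \<in> SigmaS d" and dy: "distS lam x y < lam ^ k"
    hence "agree k y x" using distS_lt_pow[OF assms(1,2)] agree_sym by blast
    thus "\<bar>g y - g x\<bar> < e" using M[OF y x] k by fastforce
  qed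
qed

lemma SUP_Max_commute:
  fixes g :: "'m \<Rightarrow> 'y \<Rightarrow> real"
  assumes Y: "finite Y" "Y \<noteq> {}" and M: "M \<noteq> {}" and bd: "\<And>y. y\<in>Y \<Longrightarrow> bdd_above ((\<lambda>m. g m y) ` M)"
  shows "(SUP m\<in>M. Max ((\<lambda>y. g m y) ` Y)) = Max ((\<lambda>y. SUP m\<in>M. g m y) ` Y)"
proof (rule antisym)
  have le: "Max ((\<lambda>y. g m y) ` Y) \<le> Max ((\<lambda>y. SUP m\<in>M. g m y) ` Y)" if m: "m \<in> M" for m
  proof (rule Max.boundedI)
    show "finite ((\<lambda>y. g m y) ` Y)" "(\<lambda>y. g m y) ` Y \<noteq> {}" using Y by auto
    fix a assume "a \<in> (\<lambda>y. g m y) ` Y"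
    then obtain y where y: "y \<in> Y" "a = g m y" by auto
    have "g m y \<le> (SUP m\<in>M. g m y)" using bd[OF y(1)] m by (intro cSUP_upper)
    also have "\<dots> \<le> Max ((\<lambda>y. SUP m\<in>M. g m y) ` Y)" using Y y by (intro Max_ge) auto
    finally show "a \<le> Max ((\<lambda>y. SUP m\<in>M. g m y) ` Y)" using y by simp
  qed
  show "(SUP m\<in>M. Max ((\<lambda>y. g m y) ` Y)) \<le> Max ((\<lambda>y. SUP m\<in>M. g m y) ` Y)"
    using M le by (intro cSUP_least) auto
  have bdM: "bdd_above ((\<lambda>m. Max ((\<lambda>y. g m y) ` Y)) ` M)"
    using le by (intro bdd_aboveI2) auto
  show "Max ((\<lambda>y. SUP m\<in>M. g m y) ` Y) \<le> (SUP m\<in>M. Max ((\<lambda>y. g m y) ` Y))"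
  proof (rule Max.boundedI)
    show "finite ((\<lambda>y. SUP m\<in>M. g m y) ` Y)" "(\<lambda>y. SUP m\<in>M. g m y) ` Y \<noteq> {}" using Y by auto
    fix a assume "a \<in> (\<lambda>y. SUP m\<in>M. g m y) ` Y"
    then obtain y where y: "y \<in> Y" "a = (SUP m\<in>M. g m y)" by auto
    have "(SUP m\<in>M. g m y) \<le> (SUP m\<in>M. Max ((\<lambda>y. g m y) ` Y))"
    proof (rule cSUP_mono[OF M bdM])
      fix n assume "n \<in> M"
      moreover have "g n y \<le> Max ((\<lambda>y. g n y) ` Y)" using Y y by (intro Max_ge) auto
      ultimately show "\<exists>m\<in>M. g n y \<le> Max ((\<lambda>y. g m y) ` Y)" by blast
    qed
    thus "a \<le> (SUP m\<in>M. Max ((\<lambda>y. g m y) ` Y))" using y by simp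
  qed
qed

lemma Max_INF_le_INF_Max:
  fixes h :: "nat \<Rightarrow> 'y \<Rightarrow> real"
  assumes Y: "finite Y" "Y \<noteq> {}" and bd: "\<And>y. y\<in>Y \<Longrightarrow> bdd_below (range (\<lambda>j. h j y))"
  shows "Max ((\<lambda>y. INF j. h j y) ` Y) \<le> (INF j. Max ((\<lambda>y. h j y) ` Y))"
proof (rule cINF_greatest)
  fix j
  show "Max ((\<lambda>y. INF j. h j y) ` Y) \<le> Max ((\<lambda>y. h j y) ` Y)"
  proof (rule Max.boundedI)
    show "finite ((\<lambda>y. INF j. h j y) ` Y)" "(\<lambda>y. INF j. h j y) ` Y \<noteq> {}" using Y by auto
    fix a assume "a \<in> (\<lambda>y. INF j. h j y) ` Y"
    then obtain y where y: "y \<in> Y" "a = (INF j. h j y)" by auto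
    have "(INF j. h j y) \<le> h j y" using bd[OF y(1)] by (intro cINF_lower) auto
    also have "\<dots> \<le> Max ((\<lambda>y. h j y) ` Y)" using Y y by (intro Max_ge) auto
    finally show "a \<le> Max ((\<lambda>y. h j y) ` Y)" using y by simp
  qed
qed simp

lemma INF_Max_le_Max_INF:
  fixes h :: "nat \<Rightarrow> 'y \<Rightarrow> real"
  assumes Y: "finite Y" "Y \<noteq> {}" and bd: "\<And>y. y\<in>Y \<Longrightarrow> bdd_below (range (\<lambda>j. h j y))"
    and dec: "\<And>y j j'. y\<in>Y \<Longrightarrow> j \<le> j' \<Longrightarrow> h j' y \<le> h j y"
  shows "(INF j. Max ((\<lambda>y. h j y) ` Y)) \<le> Max ((\<lambda>y. INF j. h j y) ` Y)"
proof (rule field_le_epsilon)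
  fix e :: real assume e: "0 < e"
  have "\<forall>y\<in>Y. \<exists>j. h j y < (INF j. h j y) + e"
  proof
    fix y assume y: "y \<in> Y"
    have "(INF j. h j y) < (INF j. h j y) + e" using e by simp
    thus "\<exists>j. h j y < (INF j. h j y) + e" using cInf_less_iff[of "range (\<lambda>j. h j y)"] bd[OF y] by blast
  qed
  then obtain jf where jf: "\<And>y. y \<in> Y \<Longrightarrow> h (jf y) y < (INF j. h j y) + e" by metis
  define J where "J = Max (jf ` Y)"
  have "Max ((\<lambda>y. h J y) ` Y) \<le> Max ((\<lambda>y. INF j. h j y) ` Y) + e"
  proof (rule Max.boundedI)
    show "finite ((\<lambda>y. h J y) ` Y)" "(\<lambda>y. h J y) ` Y \<noteq> {}" using Y by auto
    fix a assume "a \<in> (\<lambda>y. h J y) ` Y"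
    then obtain y where y: "y \<in> Y" "a = h J y" by auto
    have "jf y \<le> J" unfolding J_def using Y y by (intro Max_ge) auto
    hence "h J y \<le> h (jf y) y" using dec y by blast
    also have "\<dots> < (INF j. h j y) + e" using jf y by blast
    also have "(INF j. h j y) \<le> Max ((\<lambda>y. INF j. h j y) ` Y)" using Y y by (intro Max_ge) auto
    finally show "a \<le> Max ((\<lambda>y. INF j. h j y) ` Y) + e" using y by simp
  qed
  moreover have "(INF j. Max ((\<lambda>y. h j y) ` Y)) \<le> Max ((\<lambda>y. h J y) ` Y)"
  proof (rule cINF_lower)
    obtain y0 where y0: "y0 \<in> Y" using Y by auto
    obtain b where b: "\<And>j. b \<le> h j y0" using bd[OF y0] by (auto simp: bdd_below_def)
    have "b \<le> Max ((\<lambda>y. h j y) ` Y)" for j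
      using b[of j] Y y0 by (meson Max_ge finite_imageI image_eqI order_trans)
    thus "bdd_below (range (\<lambda>j. Max ((\<lambda>y. h j y) ` Y)))" by (intro bdd_belowI2) auto
  qed simp
  ultimately show "(INF j. Max ((\<lambda>y. h j y) ` Y)) \<le> Max ((\<lambda>y. INF j. h j y) ` Y) + e" by linarith
qed

lemma INF_Max_commute:
  fixes h :: "nat \<Rightarrow> 'y \<Rightarrow> real"
  assumes Y: "finite Y" "Y \<noteq> {}" and bd: "\<And>y. y\<in>Y \<Longrightarrow> bdd_below (range (\<lambda>j. h j y))"
    and dec: "\<And>y j j'. y\<in>Y \<Longrightarrow> j \<le> j' \<Longrightarrow> h j' y \<le> h j y"
  shows "(INF j. Max ((\<lambda>y. h j y) ` Y)) = Max ((\<lambda>y. INF j. h j y) ` Y)"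
  using INF_Max_le_Max_INF[OF Y bd dec] Max_INF_le_INF_Max[OF Y bd] by (rule antisym)

lemma INF_Suc_decreasing:
  fixes f :: "nat \<Rightarrow> real"
  assumes bd: "bdd_below (range f)" and dec: "\<And>j. f (Suc j) \<le> f j"
  shows "(INF j. f (Suc j)) = (INF j. f j)"
proof (rule antisym)
  have bd': "bdd_below (range (\<lambda>j. f (Suc j)))" using bd by (auto simp: bdd_below_def)
  show "(INF j. f (Suc j)) \<le> (INF j. f j)"
  proof (rule cINF_greatest)
    fix j have "(INF j. f (Suc j)) \<le> f (Suc j)" using cINF_lower[OF bd', of j] by simp
    thus "(INF j. f (Suc j)) \<le> f j" using dec[of j] by linarith
  qed simp
  show "(INF j. f j) \<le> (INF j. f (Suc j))"
    using bd by (intro cINF_greatest) (auto intro: cINF_lower)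
qed

text \<open>A counting fact used for the invariance of periodic orbit measures.\<close>

lemma card_shift_eq:
  assumes "Q n = Q (0::nat)"
  shows "card {i\<in>{..<n}. Q (Suc i)} = card {i\<in>{..<n}. Q i}"
proof (cases n)
  case (Suc m)
  have "card {i\<in>{..<n}. Q (Suc i)} = (\<Sum>i<n. if Q (Suc i) then 1 else 0)"
    by (simp add: sum.inter_filter[symmetric])
  also have "\<dots> = (\<Sum>i<m. if Q (Suc i) then 1 else 0) + (if Q n then 1 else 0)"
    using Suc by simp
  also have "\<dots> = (if Q 0 then 1 else 0) + (\<Sum>i<m. if Q (Suc i) then 1 else 0)"
    by (subst assms) (rule add.commute)
  also have "\<dots> = (\<Sum>i<n. if Q i then 1 else 0)"
    by (simp only: Suc sum.lessThan_Suc_shift)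
  also have "\<dots> = card {i\<in>{..<n}. Q i}"
    by (simp add: sum.inter_filter[symmetric])
  finally show ?thesis .
qed simp

lemma suminf_ennreal_eq_0_iff: "(\<Sum>i. ennreal (g i)) = 0 \<longleftrightarrow> (\<forall>i. g i \<le> 0)"
  using suminf_eq_zero_iff[OF summableI, of "\<lambda>i. ennreal (g i)"] by (simp add: ennreal_eq_0_iff)

lemma Lim_mono_right:
  fixes f :: "real \<Rightarrow> ereal"
  assumes mono: "\<And>a b. 0 < a \<Longrightarrow> a \<le> b \<Longrightarrow> f a \<le> f b"
  shows "Lim (at_right 0) f = (INF e\<in>{0<..}. f e)"
proof (rule tendsto_Lim)
  show "\<not> trivial_limit (at_right (0::real))" by simp
  show "(f \<longlongrightarrow> (INF e\<in>{0<..}. f e)) (at_right 0)"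
  proof (rule order_tendstoI)
    fix a assume a: "a < (INF e\<in>{0<..}. f e)"
    have "\<forall>y>0. y < 1 \<longrightarrow> a < f y"
    proof (intro allI impI)
      fix y :: real assume "0 < y"
      hence "(INF e\<in>{0<..}. f e) \<le> f y" by (intro INF_lower) auto
      thus "a < f y" using a by simp
    qed
    thus "\<forall>\<^sub>F x in at_right 0. a < f x" unfolding eventually_at_right_field
      by (intro exI[of _ 1]) auto
  next
    fix a assume a: "(INF e\<in>{0<..}. f e) < a"
    then obtain e0 where e0: "0 < e0" "f e0 < a" by (auto simp: INF_less_iff)
    have "\<forall>y>0. y < e0 \<longrightarrow> f y < a"
      using mono e0 by (meson le_less le_less_trans)
    thus "\<forall>\<^sub>F x in at_right 0. f x < a" unfolding eventually_at_right_field
      using e0 by (intro exI[of _ e0]) auto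
  qed
qed

locale holder_potential =
  fixes d :: nat and lam \<alpha> :: real and A :: "(nat \<Rightarrow> nat) \<Rightarrow> real"
  assumes lam0: "0 < lam" and lam1: "lam < 1" and al: "0 < \<alpha>"
    and hA: "holderS d lam \<alpha> A" and d1: "1 \<le> d"
begin

definition m_A :: real where "m_A = mA d lam A"
definition q :: real where "q = lam powr \<alpha>"

lemma q0: "0 < q" and q1: "q < 1"
  using lam0 lam1 al powr01_less_one by (auto simp: q_def)

definition CA :: real where
  "CA = (SOME C. C \<ge> 0 \<and> (\<forall>x\<in>SigmaS d. \<forall>y\<in>SigmaS d. \<forall>k. agree k x y \<longrightarrow> \<bar>A x - A y\<bar> \<le> C * q ^ k))"

lemma CA: "CA \<ge> 0" "\<And>x y k. x\<in>SigmaS d \<Longrightarrow> y\<in>SigmaS d \<Longrightarrow> agree k x y \<Longrightarrow> \<bar>A x - A y\<bar> \<le> CA * q ^ k"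
proof -
  have "\<exists>C. C \<ge> 0 \<and> (\<forall>x\<in>SigmaS d. \<forall>y\<in>SigmaS d. \<forall>k. agree k x y \<longrightarrow> \<bar>A x - A y\<bar> \<le> C * q ^ k)"
    using modulus_of_holder[OF lam0 lam1 al hA] by (simp add: q_def)
  from someI_ex[OF this] show "CA \<ge> 0" "\<And>x y k. x\<in>SigmaS d \<Longrightarrow> y\<in>SigmaS d \<Longrightarrow> agree k x y \<Longrightarrow> \<bar>A x - A y\<bar> \<le> CA * q ^ k"
    unfolding CA_def by auto
qed

definition KA :: real where "KA = \<bar>A ones\<bar> + CA"

lemma A_bound: "x \<in> SigmaS d \<Longrightarrow> \<bar>A x\<bar> \<le> KA"
  using CA(2)[of x ones 0] ones_in[OF d1] by (auto simp: KA_def)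

lemma space_borelS: "space (borelS d lam) = SigmaS d"
  by (simp add: borelS_def space_measure_of_conv)

lemma opensS_sub: "opensS d lam \<subseteq> Pow (SigmaS d)"
  by (auto simp: opensS_def)

lemma open_in_borel: "U \<in> opensS d lam \<Longrightarrow> U \<in> sets (borelS d lam)"
  unfolding borelS_def using opensS_sub by (rule in_measure_of)

lemma cont_open: "continuousS d lam g \<Longrightarrow> {x \<in> SigmaS d. a < g x} \<in> opensS d lam"
  unfolding opensS_def
proof (safe)
  fix x assume cg: "continuousS d lam g" and x: "x \<in> SigmaS d" "a < g x"
  obtain \<delta> where \<delta>: "\<delta> > 0" "\<forall>y\<in>SigmaS d. distS lam x y < \<delta> \<longrightarrow> \<bar>g y - g x\<bar> < g x - a"
    using cg x unfolding continuousS_def by (meson diff_gt_0_iff_gt)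
  show "\<exists>e>0. \<forall>y\<in>SigmaS d. distS lam x y < e \<longrightarrow> y \<in> {x \<in> SigmaS d. a < g x}"
    using \<delta> by (intro exI[of _ \<delta>]) force
qed

lemma A_cont: "continuousS d lam A"
  using continuous_of_modulus[OF lam0 lam1 al CA(1), where g=A and d=d] CA(2) by (simp add: q_def)

lemma meas_of_cont:
  assumes "sets M = sets (borelS d lam)" "continuousS d lam g"
  shows "g \<in> borel_measurable M"
  unfolding borel_measurable_iff_greater
proof
  fix a
  have sp: "space M = SigmaS d" using sets_eq_imp_space_eq[OF assms(1)] space_borelS by simp
  show "{w \<in> space M. a < g w} \<in> sets M"
    unfolding sp assms(1) by (rule open_in_borel[OF cont_open[OF assms(2)]])
qed

lemma shift_open: "U \<in> opensS d lam \<Longrightarrow> shift -` U \<inter> SigmaS d \<in> opensS d lam"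
  unfolding opensS_def
proof (safe)
  fix x assume U: "U \<subseteq> SigmaS d" "\<forall>x\<in>U. \<exists>e>0. \<forall>y\<in>SigmaS d. distS lam x y < e \<longrightarrow> y \<in> U"
    and x: "shift x \<in> U" "x \<in> SigmaS d"
  obtain e where e: "e > 0" "\<forall>y\<in>SigmaS d. distS lam (shift x) y < e \<longrightarrow> y \<in> U" using U x by blast
  obtain k where k: "lam ^ k < e" using real_arch_pow_inv[OF e(1) lam1] by blast
  show "\<exists>e>0. \<forall>y\<in>SigmaS d. distS lam x y < e \<longrightarrow> y \<in> shift -` U \<inter> SigmaS d"
  proof (intro exI[of _ "lam ^ Suc k"] conjI ballI impI)
    show "0 < lam ^ Suc k" using lam0 by simp
    fix y assume y: "y \<in> SigmaS d" and dy: "distS lam x y < lam ^ Suc k"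
    hence "agree (Suc k) x y" using distS_lt_pow[OF lam0 lam1] by blast
    hence "agree k (shift x) (shift y)" using agree_shift[of "Suc k" x y 1] by simp
    hence "distS lam (shift x) (shift y) < lam ^ k" using distS_lt_pow[OF lam0 lam1] by blast
    hence "distS lam (shift x) (shift y) < e" using k by linarith
    thus "y \<in> shift -` U \<inter> SigmaS d" using e y shift_in1 by blast
  qed
qed

lemma shift_meas_borel: "shift \<in> measurable (borelS d lam) (borelS d lam)"
proof -
  have "shift \<in> measurable (borelS d lam) (measure_of (SigmaS d) (opensS d lam) (\<lambda>x. 0))"
  proof (rule measurable_measure_of[OF opensS_sub])
    show "shift \<in> space (borelS d lam) \<rightarrow> SigmaS d" using shift_in1 by (auto simp: space_borelS)
    fix U assume "U \<in> opensS d lam"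
    thus "shift -` U \<inter> space (borelS d lam) \<in> sets (borelS d lam)"
      using shift_open open_in_borel by (simp add: space_borelS)
  qed
  thus ?thesis by (simp add: borelS_def)
qed

lemma funpow_meas: "f \<in> measurable M M \<Longrightarrow> (f ^^ i) \<in> measurable M M"
  by (induction i) (auto intro: measurable_comp simp: measurable_ident[unfolded id_def] id_def)

lemma A_meas: "sets M = sets (borelS d lam) \<Longrightarrow> A \<in> borel_measurable M"
  using meas_of_cont A_cont by blast

lemma A_int:
  assumes "prob_space M" "sets M = sets (borelS d lam)" "shift \<in> measurable M M"
  shows "integrable M (\<lambda>x. A ((shift ^^ i) x))"
proof -
  interpret prob_space M by fact
  have sp: "space M = SigmaS d" using sets_eq_imp_space_eq[OF assms(2)] space_borelS by simp
  show ?thesis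
  proof (rule integrable_const_bound[where B = KA])
    show "AE x in M. norm (A ((shift ^^ i) x)) \<le> KA"
      by (rule AE_I2) (simp add: sp A_bound shift_in)
    show "(\<lambda>x. A ((shift ^^ i) x)) \<in> borel_measurable M"
      using measurable_compose[OF funpow_meas[OF assms(3)] A_meas[OF assms(2)]] .
  qed
qed

lemma inv_distr:
  assumes "\<mu> \<in> invariant_measures d lam"
  shows "distr \<mu> \<mu> shift = \<mu>"
proof (rule measure_eqI)
  show "sets (distr \<mu> \<mu> shift) = sets \<mu>" by simp
  fix X assume "X \<in> sets (distr \<mu> \<mu> shift)"
  hence X: "X \<in> sets \<mu>" by simp
  have m: "shift \<in> measurable \<mu> \<mu>" using assms by (simp add: invariant_measures_def)
  show "emeasure (distr \<mu> \<mu> shift) X = emeasure \<mu> X"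
    using emeasure_distr[OF m X] assms X by (simp add: invariant_measures_def)
qed

lemma inv_integral:
  assumes "\<mu> \<in> invariant_measures d lam"
  shows "integral\<^sup>L \<mu> (\<lambda>x. A ((shift ^^ i) x)) = integral\<^sup>L \<mu> A"
proof (induction i)
  case (Suc i)
  have m: "shift \<in> measurable \<mu> \<mu>" and s: "sets \<mu> = sets (borelS d lam)"
    using assms by (auto simp: invariant_measures_def)
  have f: "(\<lambda>x. A ((shift ^^ i) x)) \<in> borel_measurable \<mu>"
    using measurable_compose[OF funpow_meas[OF m] A_meas[OF s]] .
  have "integral\<^sup>L \<mu> (\<lambda>x. A ((shift ^^ Suc i) x)) = integral\<^sup>L \<mu> (\<lambda>x. A ((shift ^^ i) (shift x)))"
    by (simp add: funpow_swap1)
  also have "\<dots> = integral\<^sup>L (distr \<mu> \<mu> shift) (\<lambda>x. A ((shift ^^ i) x))"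
    using integral_distr[OF m f] by simp
  also have "\<dots> = integral\<^sup>L \<mu> A" using inv_distr[OF assms] Suc by simp
  finally show ?case .
qed simp

lemma inv_bound: "\<mu> \<in> invariant_measures d lam \<Longrightarrow> integral\<^sup>L \<mu> A \<le> KA"
proof -
  assume mu: "\<mu> \<in> invariant_measures d lam"
  hence ps: "prob_space \<mu>" and s: "sets \<mu> = sets (borelS d lam)" and m: "shift \<in> measurable \<mu> \<mu>"
    by (auto simp: invariant_measures_def)
  interpret prob_space \<mu> by fact
  have sp: "space \<mu> = SigmaS d" using sets_eq_imp_space_eq[OF s] space_borelS by simp
  have "integrable \<mu> (\<lambda>x. A ((shift ^^ 0) x))" by (rule A_int[OF ps s m])
  hence "integrable \<mu> A" by simp
  thus ?thesis
    by (rule integral_le_const) (rule AE_I2, use A_bound sp in force)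
qed

definition B :: "(nat \<Rightarrow> nat) \<Rightarrow> real" where "B x = A x - m_A"
definition S :: "nat \<Rightarrow> (nat \<Rightarrow> nat) \<Rightarrow> real" where "S n z = (\<Sum>i<n. B ((shift ^^ i) z))"
definition W :: "nat \<Rightarrow> real" where "W k = CA * q ^ k / (1 - q)"

lemma S_eq: "S n z = (\<Sum>i<n. A ((shift ^^ i) z)) - real n * m_A"
  by (simp add: S_def B_def sum_subtractf)

text \<open>The variational characterisation of m_A on Birkhoff sums: a periodic orbit
  carries an invariant measure, so its Birkhoff sums are nonpositive; averaging
  over an invariant measure shows that the maximal Birkhoff sum is nonnegative.\<close>

definition orbit_measure :: "nat \<Rightarrow> (nat \<Rightarrow> nat) \<Rightarrow> (nat \<Rightarrow> nat) measure" where
  "orbit_measure n p = distr (uniform_count_measure {..<n}) (borelS d lam) (\<lambda>i. (shift ^^ i) p)"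

lemma orbit_map_measurable:
  "p \<in> SigmaS d \<Longrightarrow> (\<lambda>i. (shift ^^ i) p) \<in> measurable (uniform_count_measure {..<n}) (borelS d lam)"
  unfolding measurable_cong_sets[OF sets_uniform_count_measure_count_space refl]
  by (auto simp: space_borelS shift_in)

lemma orbit_measure_emeasure:
  assumes p: "p \<in> SigmaS d" and X: "X \<in> sets (borelS d lam)"
  shows "emeasure (orbit_measure n p) X = card {i\<in>{..<n}. (shift ^^ i) p \<in> X} / n"
proof -
  let ?U = "uniform_count_measure {..<n}"
  have "emeasure (orbit_measure n p) X = emeasure ?U ((\<lambda>i. (shift ^^ i) p) -` X \<inter> space ?U)"
    unfolding orbit_measure_def by (rule emeasure_distr[OF orbit_map_measurable[OF p] X])
  also have "(\<lambda>i. (shift ^^ i) p) -` X \<inter> space ?U = {i\<in>{..<n}. (shift ^^ i) p \<in> X}"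
    by (auto simp: space_uniform_count_measure)
  also have "emeasure ?U {i\<in>{..<n}. (shift ^^ i) p \<in> X} = card {i\<in>{..<n}. (shift ^^ i) p \<in> X} / card {..<n}"
    by (rule emeasure_uniform_count_measure) auto
  finally show ?thesis by simp
qed

lemma orbit_measure_invariant:
  assumes p: "p \<in> SigmaS d" and n: "1 \<le> n" and per: "(shift ^^ n) p = p"
  shows "orbit_measure n p \<in> invariant_measures d lam"
proof -
  let ?\<mu> = "orbit_measure n p"
  have s: "sets ?\<mu> = sets (borelS d lam)" and sp: "space ?\<mu> = SigmaS d"
    by (simp_all add: orbit_measure_def space_borelS)
  have "prob_space (uniform_count_measure {..<n})"
    using n by (intro prob_space_uniform_count_measure) (auto simp: lessThan_empty_iff)
  hence ps: "prob_space ?\<mu>"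
    unfolding orbit_measure_def by (rule prob_space.prob_space_distr[OF _ orbit_map_measurable[OF p]])
  have sm: "shift \<in> measurable ?\<mu> ?\<mu>"
    using shift_meas_borel measurable_cong_sets[OF s s] by simp
  have "emeasure ?\<mu> (shift -` X \<inter> space ?\<mu>) = emeasure ?\<mu> X" if X: "X \<in> sets ?\<mu>" for X
  proof -
    have "{i\<in>{..<n}. (shift ^^ i) p \<in> shift -` X \<inter> space ?\<mu>} = {i\<in>{..<n}. (shift ^^ Suc i) p \<in> X}"
      by (auto simp: sp shift_in p funpow_swap1)
    moreover have "card {i\<in>{..<n}. (shift ^^ Suc i) p \<in> X} = card {i\<in>{..<n}. (shift ^^ i) p \<in> X}"
      by (rule card_shift_eq[where Q = "\<lambda>i. (shift ^^ i) p \<in> X"]) (simp add: per)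
    moreover have "shift -` X \<inter> space ?\<mu> \<in> sets (borelS d lam)"
      using measurable_sets[OF sm X] s by simp
    ultimately show ?thesis using X s by (simp add: orbit_measure_emeasure[OF p])
  qed
  thus ?thesis unfolding invariant_measures_def using s ps sm by blast
qed

lemma orbit_measure_integral:
  assumes p: "p \<in> SigmaS d"
  shows "integral\<^sup>L (orbit_measure n p) A = (\<Sum>i<n. A ((shift ^^ i) p)) / n"
proof -
  have "integral\<^sup>L (orbit_measure n p) A = integral\<^sup>L (uniform_count_measure {..<n}) (\<lambda>i. A ((shift ^^ i) p))"
    unfolding orbit_measure_def by (rule integral_distr[OF orbit_map_measurable[OF p] A_meas]) simp
  also have "\<dots> = (\<Sum>i<n. A ((shift ^^ i) p)) / n"
    by (subst integral_uniform_count_measure) auto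
  finally show ?thesis .
qed

lemma inv_ne: "invariant_measures d lam \<noteq> {}"
  using orbit_measure_invariant[OF ones_in[OF d1] order_refl] shift_ones by auto

lemma inv_bdd: "bdd_above ((\<lambda>\<mu>. integral\<^sup>L \<mu> A) ` invariant_measures d lam)"
  by (rule bdd_aboveI2[where M=KA]) (rule inv_bound)

lemma periodic_birkhoff_nonpos:
  assumes p: "p \<in> SigmaS d" and n: "1 \<le> n" and per: "(shift ^^ n) p = p"
  shows "S n p \<le> 0"
proof -
  have "integral\<^sup>L (orbit_measure n p) A \<le> m_A"
    unfolding m_A_def mA_def using orbit_measure_invariant[OF assms] inv_bdd by (auto intro: cSUP_upper)
  hence "(\<Sum>i<n. A ((shift ^^ i) p)) \<le> n * m_A"
    using orbit_measure_integral[OF p] n by (simp add: field_simps)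
  thus ?thesis by (simp add: S_eq)
qed

text \<open>If all Birkhoff sums of length n were below -\<delta>, every invariant measure would
  integrate A to at most m_A - \<delta>/n, contradicting the definition of m_A.\<close>

lemma birkhoff_sum_almost_nonneg:
  assumes n: "1 \<le> n" and dl: "0 < \<delta>"
  shows "\<exists>z\<in>SigmaS d. S n z > - \<delta>"
proof (rule ccontr)
  assume "\<not> ?thesis"
  hence le: "\<And>z. z \<in> SigmaS d \<Longrightarrow> (\<Sum>i<n. A ((shift ^^ i) z)) \<le> n * m_A - \<delta>"
    by (force simp: S_eq)
  have "\<And>\<mu>. \<mu> \<in> invariant_measures d lam \<Longrightarrow> integral\<^sup>L \<mu> A \<le> m_A - \<delta> / n"
  proof -
    fix \<mu> assume mu: "\<mu> \<in> invariant_measures d lam"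
    hence ps: "prob_space \<mu>" and s: "sets \<mu> = sets (borelS d lam)" and m: "shift \<in> measurable \<mu> \<mu>"
      by (auto simp: invariant_measures_def)
    interpret prob_space \<mu> by fact
    have sp: "space \<mu> = SigmaS d" using sets_eq_imp_space_eq[OF s] space_borelS by simp
    have "n * integral\<^sup>L \<mu> A = (\<Sum>i<n. integral\<^sup>L \<mu> (\<lambda>x. A ((shift ^^ i) x)))"
      using inv_integral[OF mu] by simp
    also have "\<dots> = integral\<^sup>L \<mu> (\<lambda>x. \<Sum>i<n. A ((shift ^^ i) x))"
      using Bochner_Integration.integral_sum[of "{..<n}" \<mu> "\<lambda>i x. A ((shift ^^ i) x)"] A_int[OF ps s m] by simp
    also have "\<dots> \<le> n * m_A - \<delta>"
      by (rule integral_le_const) (auto intro!: AE_I2 integrable_sum A_int[OF ps s m] le simp: sp)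
    finally show "integral\<^sup>L \<mu> A \<le> m_A - \<delta> / n" using n by (simp add: field_simps)
  qed
  hence "m_A \<le> m_A - \<delta> / n" unfolding m_A_def mA_def
    using inv_ne by (intro cSUP_least) auto
  thus False using dl n by (simp add: field_simps)
qed

lemma B_mod: "x \<in> SigmaS d \<Longrightarrow> y \<in> SigmaS d \<Longrightarrow> agree k x y \<Longrightarrow> \<bar>B x - B y\<bar> \<le> CA * q ^ k"
  using CA(2) by (simp add: B_def)

lemma S_0[simp]: "S 0 z = 0" by (simp add: S_def)

lemma S_Suc: "S (Suc n) z = B z + S n (shift z)"
  unfolding S_def sum.lessThan_Suc_shift by (simp add: funpow_swap1)

lemma S_Suc': "S (Suc n) z = S n z + B ((shift ^^ n) z)"
  by (simp add: S_def)

text \<open>Induction on n: the i-th terms of the two Birkhoff sums are evaluated at points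
  agreeing on n + k - i symbols.\<close>

lemma distortion_aux:
  "y \<in> SigmaS d \<Longrightarrow> y' \<in> SigmaS d \<Longrightarrow> agree (n + k) y y' \<Longrightarrow>
     \<bar>S n y - S n y'\<bar> \<le> CA * (\<Sum>j<n. q ^ (k + 1 + j))"
proof (induction n arbitrary: y y')
  case (Suc n)
  have a1: "agree (n + k) (shift y) (shift y')"
    using agree_shift[OF Suc.prems(3), of 1] by simp
  have IH: "\<bar>S n (shift y) - S n (shift y')\<bar> \<le> CA * (\<Sum>j<n. q ^ (k + 1 + j))"
    using Suc.IH[OF shift_in1[OF Suc.prems(1)] shift_in1[OF Suc.prems(2)] a1] .
  have b: "\<bar>B y - B y'\<bar> \<le> CA * q ^ (k + 1 + n)"
    using B_mod[OF Suc.prems(1,2) Suc.prems(3)] by (simp add: add.commute add.left_commute)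
  have "\<bar>S (Suc n) y - S (Suc n) y'\<bar> \<le> \<bar>B y - B y'\<bar> + \<bar>S n (shift y) - S n (shift y')\<bar>"
    by (simp add: S_Suc)
  also have "\<dots> \<le> CA * q ^ (k + 1 + n) + CA * (\<Sum>j<n. q ^ (k + 1 + j))" using b IH by linarith
  also have "\<dots> = CA * (\<Sum>j<Suc n. q ^ (k + 1 + j))" by (simp add: algebra_simps)
  finally show ?case .
qed simp

lemma geo_bound: "(\<Sum>j<n. q ^ (k + 1 + j)) \<le> q ^ k / (1 - q)"
proof -
  have "(\<Sum>j<n. q ^ (k + 1 + j)) = q ^ (k + 1) * (\<Sum>j<n. q ^ j)"
    by (simp add: sum_distrib_left power_add mult.assoc)
  also have "(\<Sum>j<n. q ^ j) = (1 - q ^ n) / (1 - q)" using q1 by (simp add: sum_gp_strict)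
  also have "\<dots> \<le> 1 / (1 - q)" using q0 q1 by (intro divide_right_mono) auto
  also have "q ^ (k + 1) * (1 / (1 - q)) \<le> q ^ k / (1 - q)"
  proof -
    have "q ^ (k + 1) \<le> q ^ k" using q0 q1 by (intro power_decreasing) auto
    hence "q ^ (k + 1) / (1 - q) \<le> q ^ k / (1 - q)" using q1 by (intro divide_right_mono) auto
    thus ?thesis by simp
  qed
  finally show ?thesis using q0 by (simp add: mult_left_mono)
qed

lemma W_nonneg: "0 \<le> W k" using CA(1) q0 q1 by (simp add: W_def)

lemma bounded_distortion:
  assumes "y \<in> SigmaS d" "y' \<in> SigmaS d" "agree (n + k) y y'"
  shows "\<bar>S n y - S n y'\<bar> \<le> W k"
proof -
  have "\<bar>S n y - S n y'\<bar> \<le> CA * (\<Sum>j<n. q ^ (k + 1 + j))" by (rule distortion_aux[OF assms])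
  also have "\<dots> \<le> CA * (q ^ k / (1 - q))" using CA(1) geo_bound[where n=n and k=k] by (intro mult_left_mono)
  finally show ?thesis by (simp add: W_def)
qed

lemma W_small: "0 < e \<Longrightarrow> \<exists>k. W k < e"
proof -
  assume e: "0 < e"
  obtain k where "CA / (1 - q) * q ^ k < e"
    using small_pow[of "CA / (1 - q)" q e] CA(1) q0 q1 e by auto
  thus ?thesis by (auto simp: W_def)
qed

lemma R_F_telescope:
  "(\<Sum>i<n. R_F d lam A F ((shift ^^ i) z)) = F ((shift ^^ n) z) - F z - S n z"
proof -
  have "(\<Sum>i<n. R_F d lam A F ((shift ^^ i) z)) =
        (\<Sum>i<n. F ((shift ^^ Suc i) z) - F ((shift ^^ i) z)) - S n z"
    by (simp add: R_F_def S_def B_def m_A_def sum_subtractf[symmetric] funpow_swap1 algebra_simps)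
  also have "(\<Sum>i<n. F ((shift ^^ Suc i) z) - F ((shift ^^ i) z)) = F ((shift ^^ n) z) - F z"
    using sum_lessThan_telescope[of "\<lambda>i. F ((shift ^^ i) z)" n] by simp
  finally show ?thesis .
qed

lemma R_F_nonneg:
  assumes F: "F \<in> subactions_S d lam \<alpha> A" and x: "x \<in> SigmaS d"
  shows "0 \<le> R_F d lam A F x"
proof -
  have sx: "shift x \<in> SigmaS d" by (rule shift_in1[OF x])
  have cal: "F (shift x) = Max {F y + A y - mA d lam A | y. y \<in> SigmaS d \<and> shift y = shift x}"
    using F sx by (auto simp: subactions_S_def calibrated_subaction_def)
  have "F x + A x - mA d lam A \<le> Max {F y + A y - mA d lam A | y. y \<in> SigmaS d \<and> shift y = shift x}"
    unfolding image_set_eq using x preimages_finite[OF sx] by (intro Max_ge) auto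
  thus ?thesis using cal by (simp add: R_F_def)
qed

definition path_max :: "(nat \<Rightarrow> nat) \<Rightarrow> nat \<Rightarrow> nat \<Rightarrow> (nat \<Rightarrow> nat) \<Rightarrow> real" where
  "path_max x0 K m y = Max (S m ` paths d x0 K m y)"

lemma path_max_ge: "x0 \<in> SigmaS d \<Longrightarrow> z \<in> paths d x0 K m y \<Longrightarrow> S m z \<le> path_max x0 K m y"
  unfolding path_max_def by (intro Max_ge) (auto simp: paths_finite)

lemma path_max_att:
  assumes "x0 \<in> SigmaS d" "y \<in> SigmaS d" "K \<le> m"
  shows "\<exists>z\<in>paths d x0 K m y. path_max x0 K m y = S m z"
proof -
  have "path_max x0 K m y \<in> S m ` paths d x0 K m y"
    unfolding path_max_def using paths_finite paths_ne[OF assms] by (intro Max_in) auto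
  thus ?thesis by auto
qed

lemma path_max_mod1:
  assumes x0: "x0 \<in> SigmaS d" and y: "y1 \<in> SigmaS d" "y2 \<in> SigmaS d" and K: "K \<le> m"
    and ag: "agree k y1 y2"
  shows "path_max x0 K m y1 \<le> path_max x0 K m y2 + W k"
proof -
  obtain z where z: "z \<in> paths d x0 K m y1" "path_max x0 K m y1 = S m z" using path_max_att[OF x0 y(1) K] by blast
  have zs: "z \<in> SigmaS d" "agree K z x0" "(shift ^^ m) z = y1" using z by (auto simp: paths_def)
  define z' where "z' = prepend z m y2"
  have z's: "z' \<in> SigmaS d" unfolding z'_def by (rule prepend_in[OF zs(1) y(2)])
  have "agree K z' z" unfolding z'_def using prepend_agree agree_mono K by blast
  hence "agree K z' x0" using zs(2) agree_trans by blast
  hence zp: "z' \<in> paths d x0 K m y2" using z's by (simp add: paths_def z'_def shift_prepend)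
  have "z = prepend z m y1" using prepend_self[OF zs(3)] by simp
  hence "agree (m + k) z z'" unfolding z'_def using prepend_agree2[OF ag] by metis
  hence "\<bar>S m z - S m z'\<bar> \<le> W k" by (rule bounded_distortion[OF zs(1) z's])
  moreover have "S m z' \<le> path_max x0 K m y2" by (rule path_max_ge[OF x0 zp])
  ultimately show ?thesis using z(2) by linarith
qed

text \<open>Closing a path into a periodic orbit changes its Birkhoff sum by at most W 0,
  and periodic Birkhoff sums are nonpositive.\<close>

lemma path_max_up:
  assumes x0: "x0 \<in> SigmaS d" and y: "y \<in> SigmaS d" and K: "K \<le> m"
  shows "path_max x0 K m y \<le> W 0"
proof -
  obtain z where z: "z \<in> paths d x0 K m y" "path_max x0 K m y = S m z" using path_max_att[OF x0 y K] by blast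
  have zs: "z \<in> SigmaS d" using z by (auto simp: paths_def)
  show ?thesis
  proof (cases "m = 0")
    case True thus ?thesis using z W_nonneg by simp
  next
    case False
    define p where "p = periodize z m"
    have ps: "p \<in> SigmaS d" using zs by (auto simp: SigmaS_def p_def periodize_def)
    have pp: "(shift ^^ m) p = p"
      by (auto simp: p_def periodize_def funpow_shift' fun_eq_iff)
    have ag: "agree (m + 0) z p" by (auto simp: agree_def p_def periodize_def)
    have "S m p \<le> 0" using periodic_birkhoff_nonpos[OF ps _ pp] False by simp
    moreover have "\<bar>S m z - S m p\<bar> \<le> W 0" by (rule bounded_distortion[OF zs ps ag])
    ultimately show ?thesis using z by linarith
  qed
qed

text \<open>Some Birkhoff sum of length m is almost nonnegative; redirecting its end to y
  costs at most W 0.\<close>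

lemma path_max_low0:
  assumes x0: "x0 \<in> SigmaS d" and y: "y \<in> SigmaS d"
  shows "- W 0 \<le> path_max x0 0 m y"
proof (cases "m = 0")
  case True
  obtain z where z: "z \<in> paths d x0 0 m y" "path_max x0 0 m y = S m z" using path_max_att[OF x0 y] by blast
  thus ?thesis using True W_nonneg by simp
next
  case False
  show ?thesis
  proof (rule field_le_epsilon)
    fix e :: real assume e: "0 < e"
    obtain z where z: "z \<in> SigmaS d" "S m z > - e" using birkhoff_sum_almost_nonneg[of m e] False e by auto
    define z' where "z' = prepend z m y"
    have z's: "z' \<in> SigmaS d" unfolding z'_def by (rule prepend_in[OF z(1) y])
    have zp: "z' \<in> paths d x0 0 m y" using z's by (simp add: paths_def z'_def shift_prepend)
    have "agree (m + 0) z z'" unfolding z'_def using prepend_agree agree_sym by simp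
    hence "\<bar>S m z - S m z'\<bar> \<le> W 0" by (rule bounded_distortion[OF z(1) z's])
    moreover have "S m z' \<le> path_max x0 0 m y" by (rule path_max_ge[OF x0 zp])
    ultimately show "- W 0 \<le> path_max x0 0 m y + e" using z(2) by linarith
  qed
qed

text \<open>The path that follows x0 for m steps and then jumps to y bounds path_max from below.\<close>

lemma path_max_lowx:
  assumes x0: "x0 \<in> SigmaS d" and y: "y \<in> SigmaS d" and K: "K \<le> m"
    and L: "\<And>n. - L \<le> S n x0"
  shows "- L - W 0 \<le> path_max x0 K m y"
proof -
  define z' where "z' = prepend x0 m y"
  have zp: "z' \<in> paths d x0 K m y" unfolding z'_def by (rule paths_ne[OF x0 y K])
  have z's: "z' \<in> SigmaS d" using zp by (simp add: paths_def)
  have "agree (m + 0) x0 z'" unfolding z'_def using prepend_agree agree_sym by simp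
  hence "\<bar>S m x0 - S m z'\<bar> \<le> W 0" by (rule bounded_distortion[OF x0 z's])
  moreover have "S m z' \<le> path_max x0 K m y" by (rule path_max_ge[OF x0 zp])
  ultimately show ?thesis using L[of m] by linarith
qed

text \<open>Dynamic programming: a path of length m + 1 to y is a path of length m to a
  preimage of y followed by one step.\<close>

lemma path_max_step:
  assumes x0: "x0 \<in> SigmaS d" and y: "y \<in> SigmaS d" and K: "K \<le> m"
  shows "path_max x0 K (Suc m) y = Max ((\<lambda>z. B z + path_max x0 K m z) ` {z. z \<in> SigmaS d \<and> shift z = y})"
proof (rule antisym)
  let ?Y = "{z. z \<in> SigmaS d \<and> shift z = y}"
  have fin: "finite ?Y" and ne: "?Y \<noteq> {}" using preimages_finite[OF y] preimages_ne[OF y d1] by auto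
  obtain z where z: "z \<in> paths d x0 K (Suc m) y" "path_max x0 K (Suc m) y = S (Suc m) z"
    using path_max_att[OF x0 y] K by (metis le_SucI)
  have zs: "z \<in> SigmaS d" "agree K z x0" "(shift ^^ Suc m) z = y" using z by (auto simp: paths_def)
  define u where "u = (shift ^^ m) z"
  have uY: "u \<in> ?Y" using zs by (auto simp: u_def shift_in funpow_swap1)
  have zu: "z \<in> paths d x0 K m u" using zs by (simp add: paths_def u_def)
  have "S (Suc m) z = B u + S m z" by (simp add: S_Suc' u_def)
  also have "\<dots> \<le> B u + path_max x0 K m u" using path_max_ge[OF x0 zu] by simp
  also have "\<dots> \<le> Max ((\<lambda>z. B z + path_max x0 K m z) ` ?Y)" using fin uY by (intro Max_ge) auto
  finally show "path_max x0 K (Suc m) y \<le> Max ((\<lambda>z. B z + path_max x0 K m z) ` ?Y)" using z by simp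
  show "Max ((\<lambda>z. B z + path_max x0 K m z) ` ?Y) \<le> path_max x0 K (Suc m) y"
  proof (rule Max.boundedI)
    show "finite ((\<lambda>z. B z + path_max x0 K m z) ` ?Y)" using fin by simp
    show "(\<lambda>z. B z + path_max x0 K m z) ` ?Y \<noteq> {}" using ne by simp
    fix a assume "a \<in> (\<lambda>z. B z + path_max x0 K m z) ` ?Y"
    then obtain u where u: "u \<in> SigmaS d" "y = shift u" and a: "a = B u + path_max x0 K m u" by auto
    show "a \<le> path_max x0 K (Suc m) y" unfolding a u(2)
    proof -
    obtain z where z: "z \<in> paths d x0 K m u" "path_max x0 K m u = S m z" using path_max_att[OF x0 u(1) K] by blast
    have zs: "z \<in> SigmaS d" "agree K z x0" "(shift ^^ m) z = u" using z by (auto simp: paths_def)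
    have "(shift ^^ Suc m) z = shift u" using zs(3) by simp
    hence zp: "z \<in> paths d x0 K (Suc m) (shift u)" using zs by (simp add: paths_def del: funpow.simps)
    have "B u + path_max x0 K m u = S (Suc m) z" using z zs by (simp add: S_Suc')
    also have "\<dots> \<le> path_max x0 K (Suc m) (shift u)" by (rule path_max_ge[OF x0 zp])
    finally show "B u + path_max x0 K m u \<le> path_max x0 K (Suc m) (shift u)" .
    qed
  qed
qed

definition tail_sup :: "(nat \<Rightarrow> nat) \<Rightarrow> nat \<Rightarrow> nat \<Rightarrow> (nat \<Rightarrow> nat) \<Rightarrow> real" where
  "tail_sup x0 K j y = (SUP m\<in>{j+K..}. path_max x0 K m y)"
definition barrier :: "(nat \<Rightarrow> nat) \<Rightarrow> nat \<Rightarrow> (nat \<Rightarrow> nat) \<Rightarrow> real" where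
  "barrier x0 K y = (INF j. tail_sup x0 K j y)"

text \<open>Whenever path_max x0 K is bounded below, the barrier is an alpha-Hoelder calibrated sub-action.\<close>

context
  fixes x0 K L
  assumes x0: "x0 \<in> SigmaS d"
    and lowG: "\<And>m y. K \<le> m \<Longrightarrow> y \<in> SigmaS d \<Longrightarrow> - L \<le> path_max x0 K m y"
begin

lemma path_max_bdd_above: "y \<in> SigmaS d \<Longrightarrow> bdd_above ((\<lambda>m. path_max x0 K m y) ` {j+K..})"
  using path_max_up[OF x0] by (intro bdd_aboveI2[where M="W 0"]) auto

lemma path_max_le_tail_sup: "y \<in> SigmaS d \<Longrightarrow> j + K \<le> m \<Longrightarrow> path_max x0 K m y \<le> tail_sup x0 K j y"
  unfolding tail_sup_def using path_max_bdd_above by (intro cSUP_upper) auto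

lemma tail_sup_le: "y \<in> SigmaS d \<Longrightarrow> tail_sup x0 K j y \<le> W 0"
  unfolding tail_sup_def using path_max_up[OF x0] by (intro cSUP_least) auto

lemma tail_sup_ge: "y \<in> SigmaS d \<Longrightarrow> - L \<le> tail_sup x0 K j y"
  using path_max_le_tail_sup[of y j "j+K"] lowG[of "j+K" y] by linarith

lemma tail_sup_dec: "y \<in> SigmaS d \<Longrightarrow> j \<le> j' \<Longrightarrow> tail_sup x0 K j' y \<le> tail_sup x0 K j y"
  unfolding tail_sup_def using path_max_bdd_above by (intro cSUP_subset_mono) auto

lemma tail_sup_bdd_below: "y \<in> SigmaS d \<Longrightarrow> bdd_below (range (\<lambda>j. tail_sup x0 K j y))"
  using tail_sup_ge by (intro bdd_belowI2[where m="-L"]) auto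

lemma barrier_le_tail_sup: "y \<in> SigmaS d \<Longrightarrow> barrier x0 K y \<le> tail_sup x0 K j y"
  unfolding barrier_def using tail_sup_bdd_below by (intro cINF_lower) auto

lemma barrier_ge: "y \<in> SigmaS d \<Longrightarrow> - L \<le> barrier x0 K y"
  unfolding barrier_def using tail_sup_ge by (intro cINF_greatest) auto

lemma barrier_le: "y \<in> SigmaS d \<Longrightarrow> barrier x0 K y \<le> W 0"
  using barrier_le_tail_sup[of y 0] tail_sup_le[of y 0] by linarith

lemma barrier_mod1:
  assumes y: "y1 \<in> SigmaS d" "y2 \<in> SigmaS d" and ag: "agree k y1 y2"
  shows "barrier x0 K y1 \<le> barrier x0 K y2 + W k"
proof -
  have UU: "tail_sup x0 K j y1 \<le> tail_sup x0 K j y2 + W k" for j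
    unfolding tail_sup_def[of _ _ _ y1]
  proof (rule cSUP_least)
    fix m assume m: "m \<in> {j+K..}"
    have "path_max x0 K m y1 \<le> path_max x0 K m y2 + W k" using path_max_mod1[OF x0 y _ ag] m by auto
    also have "\<dots> \<le> tail_sup x0 K j y2 + W k" using path_max_le_tail_sup[OF y(2)] m by auto
    finally show "path_max x0 K m y1 \<le> tail_sup x0 K j y2 + W k" .
  qed simp
  have "barrier x0 K y1 - W k \<le> tail_sup x0 K j y2" for j using UU[of j] barrier_le_tail_sup[OF y(1), of j] by linarith
  hence "barrier x0 K y1 - W k \<le> barrier x0 K y2" unfolding barrier_def[of _ _ y2] by (intro cINF_greatest) auto
  thus ?thesis by simp
qed

lemma barrier_mod:
  assumes y: "y1 \<in> SigmaS d" "y2 \<in> SigmaS d" and ag: "agree k y1 y2"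
  shows "\<bar>barrier x0 K y1 - barrier x0 K y2\<bar> \<le> W k"
  using barrier_mod1[OF y ag] barrier_mod1[OF y(2,1) agree_sym[OF ag]] by linarith

lemma tail_sup_step:
  assumes y: "y \<in> SigmaS d"
  shows "tail_sup x0 K (Suc j) y = Max ((\<lambda>z. B z + tail_sup x0 K j z) ` {z. z \<in> SigmaS d \<and> shift z = y})"
proof -
  let ?Y = "{z. z \<in> SigmaS d \<and> shift z = y}"
  have fin: "finite ?Y" and ne: "?Y \<noteq> {}" using preimages_finite[OF y] preimages_ne[OF y d1] by auto
  have Ys: "?Y \<subseteq> SigmaS d" by auto
  have "{Suc j + K..} = Suc ` {j+K..}"
  proof (intro set_eqI iffI)
    fix m assume "m \<in> {Suc j + K..}"
    hence "m = Suc (m - 1)" "m - 1 \<in> {j+K..}" by auto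
    thus "m \<in> Suc ` {j+K..}" by blast
  qed auto
  hence "tail_sup x0 K (Suc j) y = (SUP m\<in>{j+K..}. path_max x0 K (Suc m) y)"
    unfolding tail_sup_def by (simp add: image_image)
  also have "\<dots> = (SUP m\<in>{j+K..}. Max ((\<lambda>z. B z + path_max x0 K m z) ` ?Y))"
    using path_max_step[OF x0 y] by (intro SUP_cong) auto
  also have "\<dots> = Max ((\<lambda>z. SUP m\<in>{j+K..}. B z + path_max x0 K m z) ` ?Y)"
  proof (rule SUP_Max_commute[OF fin ne])
    fix z assume z: "z \<in> ?Y"
    show "bdd_above ((\<lambda>m. B z + path_max x0 K m z) ` {j+K..})"
      using path_max_up[OF x0, of z] z by (intro bdd_aboveI2[where M="B z + W 0"]) auto
  qed simp
  also have "\<dots> = Max ((\<lambda>z. B z + tail_sup x0 K j z) ` ?Y)"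
    unfolding tail_sup_def using path_max_bdd_above by (intro arg_cong[where f=Max] image_cong refl Sup_add_eq) auto
  finally show ?thesis .
qed

lemma barrier_cal:
  assumes y: "y \<in> SigmaS d"
  shows "barrier x0 K y = Max ((\<lambda>z. B z + barrier x0 K z) ` {z. z \<in> SigmaS d \<and> shift z = y})"
proof -
  let ?Y = "{z. z \<in> SigmaS d \<and> shift z = y}"
  have fin: "finite ?Y" and ne: "?Y \<noteq> {}" using preimages_finite[OF y] preimages_ne[OF y d1] by auto
  have "barrier x0 K y = (INF j. tail_sup x0 K (Suc j) y)"
    unfolding barrier_def using tail_sup_bdd_below[OF y] tail_sup_dec[OF y] by (intro INF_Suc_decreasing[symmetric]) auto
  also have "\<dots> = (INF j. Max ((\<lambda>z. B z + tail_sup x0 K j z) ` ?Y))"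
    using tail_sup_step[OF y] by simp
  also have "\<dots> = Max ((\<lambda>z. INF j. B z + tail_sup x0 K j z) ` ?Y)"
  proof (rule INF_Max_commute[OF fin ne])
    fix z assume z: "z \<in> ?Y"
    show "bdd_below (range (\<lambda>j. B z + tail_sup x0 K j z))"
      using tail_sup_ge z by (intro bdd_belowI2[where m="B z - L"]) force
    fix j j' :: nat assume "j \<le> j'"
    thus "B z + tail_sup x0 K j' z \<le> B z + tail_sup x0 K j z" using tail_sup_dec z by auto
  qed
  also have "\<dots> = Max ((\<lambda>z. B z + barrier x0 K z) ` ?Y)"
    unfolding barrier_def using tail_sup_bdd_below by (intro arg_cong[where f=Max] image_cong refl Inf_add_eq) auto
  finally show ?thesis .
qed

lemma barrier_sub: "barrier x0 K \<in> subactions_S d lam \<alpha> A"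
proof -
  have C: "0 \<le> CA / (1 - q)" using CA(1) q1 by simp
  have M: "\<And>x y k. x\<in>SigmaS d \<Longrightarrow> y\<in>SigmaS d \<Longrightarrow> agree k x y \<Longrightarrow>
      \<bar>barrier x0 K x - barrier x0 K y\<bar> \<le> CA / (1 - q) * (lam powr \<alpha>) ^ k"
    using barrier_mod by (simp add: W_def q_def)
  have "holderS d lam \<alpha> (barrier x0 K)" by (rule holder_of_modulus[OF lam0 lam1 al C M])
  moreover have "continuousS d lam (barrier x0 K)" by (rule continuous_of_modulus[OF lam0 lam1 al C M])
  moreover have "barrier x0 K x = Max {barrier x0 K y + A y - mA d lam A | y. y \<in> SigmaS d \<and> shift y = x}"
    if x: "x \<in> SigmaS d" for x
    unfolding image_set_eq barrier_cal[OF x] by (intro arg_cong[where f=Max] image_cong) (auto simp: B_def m_A_def)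
  ultimately show ?thesis by (simp add: subactions_S_def calibrated_subaction_def)
qed

end

text \<open>Without a cylinder constraint path_max is bounded below by -W 0, so barrier x0 0
  is always a sub-action with modulus W.\<close>

lemma barrier_unconstrained:
  assumes x0: "x0 \<in> SigmaS d"
  shows "barrier x0 0 \<in> subactions_S d lam \<alpha> A"
    and "\<And>y. y \<in> SigmaS d \<Longrightarrow> \<bar>barrier x0 0 y\<bar> \<le> W 0"
    and "\<And>y1 y2 k. y1 \<in> SigmaS d \<Longrightarrow> y2 \<in> SigmaS d \<Longrightarrow> agree k y1 y2 \<Longrightarrow>
           \<bar>barrier x0 0 y1 - barrier x0 0 y2\<bar> \<le> W k"
proof -
  have low0: "\<And>m y. 0 \<le> m \<Longrightarrow> y \<in> SigmaS d \<Longrightarrow> - W 0 \<le> path_max x0 0 m y"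
    using path_max_low0[OF x0] by blast
  show "barrier x0 0 \<in> subactions_S d lam \<alpha> A" by (rule barrier_sub[OF x0 low0])
  show "\<And>y. y \<in> SigmaS d \<Longrightarrow> \<bar>barrier x0 0 y\<bar> \<le> W 0"
    using barrier_ge[OF x0 low0] barrier_le[OF x0 low0] by (fastforce simp: abs_le_iff)
  show "\<And>y1 y2 k. y1 \<in> SigmaS d \<Longrightarrow> y2 \<in> SigmaS d \<Longrightarrow> agree k y1 y2 \<Longrightarrow>
           \<bar>barrier x0 0 y1 - barrier x0 0 y2\<bar> \<le> W k"
    by (rule barrier_mod[OF x0 low0])
qed

definition mane_approx :: "(nat \<Rightarrow> nat) \<Rightarrow> real \<Rightarrow> ereal" where
  "mane_approx x e = Sup {ereal (S n z) | n z. n \<ge> 1 \<and> z \<in> SigmaS d \<and> (shift ^^ n) z = x \<and> distS lam z x < e}"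

lemma S_eq2: "S n z = (\<Sum>i<n. A ((shift ^^ i) z) - mA d lam A)"
  by (simp add: S_def B_def m_A_def)

lemma mane_eq_INF_approx: "mane d lam A x x = (INF e\<in>{0<..}. mane_approx x e)"
proof -
  have "mane d lam A x x = Lim (at_right 0) (mane_approx x)"
    unfolding mane_def mane_approx_def S_eq2 ..
  also have "\<dots> = (INF e\<in>{0<..}. mane_approx x e)"
  proof (rule Lim_mono_right)
    fix a b :: real assume "0 < a" "a \<le> b"
    thus "mane_approx x a \<le> mane_approx x b" unfolding mane_approx_def by (intro Sup_subset_mono) force
  qed
  finally show ?thesis .
qed

lemma mane_approx_witness:
  assumes "0 \<le> mane_approx x e" "0 < \<delta>"
  shows "\<exists>n z. n \<ge> 1 \<and> z \<in> SigmaS d \<and> (shift ^^ n) z = x \<and> distS lam z x < e \<and> S n z > - \<delta>"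
proof -
  have "ereal (- \<delta>) < 0" using assms by simp
  hence "ereal (- \<delta>) < mane_approx x e" using assms(1) by (rule less_le_trans)
  then obtain v where "v \<in> {ereal (S n z) | n z. n \<ge> 1 \<and> z \<in> SigmaS d \<and> (shift ^^ n) z = x \<and> distS lam z x < e}"
    "ereal (- \<delta>) < v" unfolding mane_approx_def less_Sup_iff by blast
  thus ?thesis by fastforce
qed

text \<open>Comparing with the sub-action barrier x0 0 shows S_A(x0, x0) \<le> 0 always.\<close>

lemma mane_approx_le:
  assumes x0: "x0 \<in> SigmaS d"
  shows "mane_approx x0 (lam ^ K) \<le> ereal (W K)"
  unfolding mane_approx_def
proof (rule Sup_least)
  let ?F = "barrier x0 0"
  fix v assume "v \<in> {ereal (S n z) | n z. n \<ge> 1 \<and> z \<in> SigmaS d \<and> (shift ^^ n) z = x0 \<and> distS lam z x0 < lam ^ K}"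
  then obtain n z where nz: "v = ereal (S n z)" "z \<in> SigmaS d" "(shift ^^ n) z = x0" "distS lam z x0 < lam ^ K"
    by blast
  have ag: "agree K z x0" using nz(4) distS_lt_pow[OF lam0 lam1] by blast
  have "(\<Sum>i<n. R_F d lam A ?F ((shift ^^ i) z)) = ?F x0 - ?F z - S n z"
    using R_F_telescope[where n=n and F="?F" and z=z] nz(3) by simp
  moreover have "0 \<le> (\<Sum>i<n. R_F d lam A ?F ((shift ^^ i) z))"
    using R_F_nonneg[OF barrier_unconstrained(1)[OF x0]] shift_in[OF nz(2)] by (intro sum_nonneg) auto
  moreover have "\<bar>?F z - ?F x0\<bar> \<le> W K" by (rule barrier_unconstrained(3)[OF x0 nz(2) x0 ag])
  ultimately have "S n z \<le> W K" by linarith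
  thus "v \<le> ereal (W K)" using nz(1) by simp
qed

lemma R_mod:
  assumes F: "\<And>x y k. x\<in>SigmaS d \<Longrightarrow> y\<in>SigmaS d \<Longrightarrow> agree k x y \<Longrightarrow> \<bar>F x - F y\<bar> \<le> CF * q ^ k"
    and CF: "0 \<le> CF" and u: "u \<in> SigmaS d" "v \<in> SigmaS d" and ag: "agree (Suc k) u v"
  shows "\<bar>R_F d lam A F u - R_F d lam A F v\<bar> \<le> (2 * CF + CA) * q ^ k"
proof -
  have a1: "agree k (shift u) (shift v)" using agree_shift[OF ag, of 1] by simp
  have b1: "\<bar>F (shift u) - F (shift v)\<bar> \<le> CF * q ^ k" using F[OF shift_in1[OF u(1)] shift_in1[OF u(2)] a1] .
  have b2: "\<bar>F u - F v\<bar> \<le> CF * q ^ k" using F[OF u agree_mono[OF ag]] by simp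
  have b3: "\<bar>A u - A v\<bar> \<le> CA * q ^ k" using CA(2)[OF u agree_mono[OF ag]] by simp
  show ?thesis using b1 b2 b3 by (simp add: R_F_def algebra_simps abs_le_iff)
qed

lemma R_F_le_return:
  assumes F: "F \<in> subactions_S d lam \<alpha> A" and CF: "0 \<le> CF"
    and modF: "\<And>x y k. x\<in>SigmaS d \<Longrightarrow> y\<in>SigmaS d \<Longrightarrow> agree k x y \<Longrightarrow> \<bar>F x - F y\<bar> \<le> CF * q ^ k"
    and x: "x \<in> SigmaS d" and z: "z \<in> SigmaS d" and n: "1 \<le> n"
    and ret: "(shift ^^ n) z = x" and ag: "agree (k + j + 1) z x"
  shows "R_F d lam A F ((shift ^^ j) x) \<le> (3 * CF + CA) * q ^ k - S n z"
proof -
  obtain i where i: "i < n" "agree (Suc k) ((shift ^^ i) z) ((shift ^^ j) x)"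
    using return_orbit_shadows[OF n ret ag] .
  have "\<bar>R_F d lam A F ((shift ^^ i) z) - R_F d lam A F ((shift ^^ j) x)\<bar> \<le> (2 * CF + CA) * q ^ k"
    by (rule R_mod[OF modF CF shift_in[OF z] shift_in[OF x] i(2)])
  moreover have "R_F d lam A F ((shift ^^ i) z) \<le> (\<Sum>l<n. R_F d lam A F ((shift ^^ l) z))"
    using i(1) R_F_nonneg[OF F] shift_in[OF z] by (intro member_le_sum) auto
  moreover have "(\<Sum>l<n. R_F d lam A F ((shift ^^ l) z)) = F x - F z - S n z"
    using R_F_telescope[where n=n and F=F and z=z] ret by simp
  moreover have "\<bar>F x - F z\<bar> \<le> CF * q ^ k"
  proof -
    have "\<bar>F x - F z\<bar> \<le> CF * q ^ (k + j + 1)" by (rule modF[OF x z agree_sym[OF ag]])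
    also have "\<dots> \<le> CF * q ^ k" using CF q0 q1 by (intro mult_left_mono power_decreasing) auto
    finally show ?thesis .
  qed
  moreover have "(3 * CF + CA) * q ^ k = (2 * CF + CA) * q ^ k + CF * q ^ k"
    by (simp add: algebra_simps)
  ultimately show ?thesis by (simp only: abs_le_iff) linarith
qed

text \<open>For x in the Aubry set such segments exist for every k, so R_F vanishes on the orbit of x.\<close>

lemma aubry_imp_I_F_zero:
  assumes x: "x \<in> aubry d lam A" and F: "F \<in> subactions_S d lam \<alpha> A"
  shows "I_F d lam A F x = 0"
proof -
  have xs: "x \<in> SigmaS d" and m0: "mane d lam A x x = 0" using x by (auto simp: aubry_def)
  have approx_nonneg: "0 \<le> mane_approx x e" if "0 < e" for e
  proof -
    have "(INF e\<in>{0<..}. mane_approx x e) \<le> mane_approx x e" using that by (intro INF_lower) auto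
    thus ?thesis using m0 mane_eq_INF_approx by simp
  qed
  obtain CF where CF: "CF \<ge> 0"
    "\<And>x y k. x\<in>SigmaS d \<Longrightarrow> y\<in>SigmaS d \<Longrightarrow> agree k x y \<Longrightarrow> \<bar>F x - F y\<bar> \<le> CF * q ^ k"
    using modulus_of_holder[OF lam0 lam1 al, of d F] F by (auto simp: subactions_S_def q_def)
  have "R_F d lam A F ((shift ^^ j) x) \<le> 0" for j
  proof (rule field_le_epsilon)
    fix e :: real assume e: "0 < e"
    obtain k where k: "(3 * CF + CA) * q ^ k < e / 2"
      using small_pow[of "3 * CF + CA" q "e / 2"] CF(1) CA(1) q0 q1 e by auto
    obtain n z where nz: "n \<ge> 1" "z \<in> SigmaS d" "(shift ^^ n) z = x"
        "distS lam z x < lam ^ (k + j + 1)" "S n z > - (e / 2)"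
      using mane_approx_witness[OF approx_nonneg, of "lam ^ (k + j + 1)" "e / 2"] lam0 e by auto
    have "agree (k + j + 1) z x" using nz(4) distS_lt_pow[OF lam0 lam1] by blast
    hence "R_F d lam A F ((shift ^^ j) x) \<le> (3 * CF + CA) * q ^ k - S n z"
      using R_F_le_return[OF F CF(1) CF(2) xs nz(2) nz(1) nz(3)] by blast
    thus "R_F d lam A F ((shift ^^ j) x) \<le> 0 + e" using k nz(5) by linarith
  qed
  thus ?thesis unfolding I_F_def suminf_ennreal_eq_0_iff by blast
qed

lemma I_F_zero_R_F:
  assumes F: "F \<in> subactions_S d lam \<alpha> A" and x: "x \<in> SigmaS d" and I: "I_F d lam A F x = 0"
  shows "R_F d lam A F ((shift ^^ i) x) = 0"
  using I R_F_nonneg[OF F shift_in[OF x]] unfolding I_F_def suminf_ennreal_eq_0_iff by (meson order.antisym)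

lemma I_F_zero_birkhoff:
  assumes F: "F \<in> subactions_S d lam \<alpha> A" and x: "x \<in> SigmaS d" and I: "I_F d lam A F x = 0"
  shows "S n x = F ((shift ^^ n) x) - F x"
  using R_F_telescope[where n=n and F=F and z=x] I_F_zero_R_F[OF F x I] by simp

context
  fixes x0
  assumes x0: "x0 \<in> SigmaS d"
    and flat: "\<forall>F\<in>subactions_S d lam \<alpha> A. I_F d lam A F x0 = 0"
begin

lemma birkhoff_x0_lower: "- (2 * W 0) \<le> S n x0"
proof -
  have "S n x0 = barrier x0 0 ((shift ^^ n) x0) - barrier x0 0 x0"
    using I_F_zero_birkhoff[OF barrier_unconstrained(1)[OF x0] x0] flat barrier_unconstrained(1)[OF x0]
    by blast
  moreover have "\<bar>barrier x0 0 ((shift ^^ n) x0)\<bar> \<le> W 0" "\<bar>barrier x0 0 x0\<bar> \<le> W 0"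
    using barrier_unconstrained(2)[OF x0] shift_in[OF x0] x0 by auto
  ultimately show ?thesis by (simp add: abs_le_iff)
qed

lemma path_max_x0_lower: "K \<le> m \<Longrightarrow> y \<in> SigmaS d \<Longrightarrow> - (3 * W 0) \<le> path_max x0 K m y"
  using path_max_lowx[OF x0 _ _ birkhoff_x0_lower, of y K m] by linarith

lemma barrier_x0_sub: "barrier x0 K \<in> subactions_S d lam \<alpha> A"
  by (rule barrier_sub[OF x0 path_max_x0_lower])

text \<open>Returning infinitely often near a recurrent block of x0 and comparing with
  barrier x0 0 bounds barrier x0 K x0 from below by -2 W k.\<close>

lemma barrier_base_approx: "- (2 * W k) \<le> barrier x0 K x0"
proof -
  have SK: "S n x0 = barrier x0 K ((shift ^^ n) x0) - barrier x0 K x0" for n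
    using I_F_zero_birkhoff[OF barrier_x0_sub x0] flat barrier_x0_sub by blast
  have S0: "S n x0 = barrier x0 0 ((shift ^^ n) x0) - barrier x0 0 x0" for n
    using I_F_zero_birkhoff[OF barrier_unconstrained(1)[OF x0] x0] flat barrier_unconstrained(1)[OF x0]
    by blast
  obtain n1 where inf: "infinite {m. agree k ((shift ^^ m) x0) ((shift ^^ n1) x0)}"
    using recurrent_block[OF x0] .
  let ?y = "(shift ^^ n1) x0"
  have ys: "?y \<in> SigmaS d" by (rule shift_in[OF x0])
  have "S n1 x0 - 2 * W k \<le> tail_sup x0 K j ?y" for j
  proof -
    obtain m where m: "m \<ge> j + K" "agree k ((shift ^^ m) x0) ?y"
      using inf unfolding infinite_nat_iff_unbounded_le by blast
    define z where "z = prepend x0 m ?y"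
    have zp: "z \<in> paths d x0 K m ?y" unfolding z_def using m(1) by (intro paths_ne[OF x0 ys]) auto
    have zs: "z \<in> SigmaS d" using zp by (simp add: paths_def)
    have "agree (m + k) x0 z" unfolding z_def by (rule agree_prepend_shift[OF m(2)])
    hence d1: "\<bar>S m x0 - S m z\<bar> \<le> W k" by (rule bounded_distortion[OF x0 zs])
    have d2: "\<bar>barrier x0 0 ((shift ^^ m) x0) - barrier x0 0 ?y\<bar> \<le> W k"
      by (rule barrier_unconstrained(3)[OF x0 shift_in[OF x0] ys m(2)])
    have "S m z \<le> path_max x0 K m ?y" by (rule path_max_ge[OF x0 zp])
    also have "\<dots> \<le> tail_sup x0 K j ?y"
      using m(1) by (intro path_max_le_tail_sup[OF x0 path_max_x0_lower ys]) auto
    finally show ?thesis using d1 d2 S0[of m] S0[of n1] by linarith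
  qed
  hence "S n1 x0 - 2 * W k \<le> barrier x0 K ?y" unfolding barrier_def by (intro cINF_greatest) auto
  thus ?thesis using SK[of n1] by linarith
qed

lemma barrier_base_nonneg: "0 \<le> barrier x0 K x0"
proof (rule field_le_epsilon)
  fix e :: real assume "0 < e"
  then obtain k where "W k < e / 2" using W_small[of "e/2"] by auto
  thus "0 \<le> barrier x0 K x0 + e" using barrier_base_approx[of k K] by linarith
qed

text \<open>Nonnegativity at x0 produces the returning segments.\<close>

lemma return_to_x0:
  assumes K: "1 \<le> K" and dl: "0 < \<delta>"
  shows "\<exists>m z. m \<ge> 1 \<and> z \<in> SigmaS d \<and> (shift ^^ m) z = x0 \<and> agree K z x0 \<and> S m z > - \<delta>"
proof -
  have "- \<delta> < tail_sup x0 K 0 x0"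
    using barrier_base_nonneg[of K] barrier_le_tail_sup[OF x0 path_max_x0_lower x0, of K 0] dl by linarith
  then obtain m where m: "m \<in> {0+K..}" "- \<delta> < path_max x0 K m x0"
    unfolding tail_sup_def
    using less_cSUP_iff[of "{0+K..}" "\<lambda>m. path_max x0 K m x0" "- \<delta>"]
      path_max_bdd_above[OF x0 path_max_x0_lower x0, of K 0]
    by auto
  obtain z where z: "z \<in> paths d x0 K m x0" "path_max x0 K m x0 = S m z"
    using path_max_att[OF x0 x0] m(1) by auto
  show ?thesis using z m K by (intro exI[of _ m] exI[of _ z]) (auto simp: paths_def)
qed

text \<open>These segments start arbitrarily close to x0, so S_A(x0, x0) \<ge> 0.\<close>

lemma mane_approx_x0_nonneg:
  assumes e: "0 < e"
  shows "0 \<le> mane_approx x0 e"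
proof (rule ereal_le_epsilon2)
  fix \<delta> :: real assume dl: "0 < \<delta>"
  obtain k where k: "lam ^ k < e" using real_arch_pow_inv[OF e lam1] by blast
  obtain m z where mz: "m \<ge> 1" "z \<in> SigmaS d" "(shift ^^ m) z = x0" "agree (Suc k) z x0" "S m z > - \<delta>"
    using return_to_x0[of "Suc k" \<delta>] dl by auto
  have "distS lam z x0 < lam ^ Suc k" using mz(4) distS_lt_pow[OF lam0 lam1] by blast
  moreover have "lam ^ Suc k \<le> lam ^ k" using lam0 lam1 by (intro power_decreasing) auto
  ultimately have "distS lam z x0 < e" using k by linarith
  hence "ereal (S m z) \<le> mane_approx x0 e" unfolding mane_approx_def using mz by (intro Sup_upper) blast
  hence "ereal (- \<delta>) \<le> mane_approx x0 e" using mz(5) by (meson ereal_less_eq(3) less_imp_le order.trans)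
  thus "0 \<le> mane_approx x0 e + ereal \<delta>"
    by (cases "mane_approx x0 e") (auto simp: ereal_less_eq)
qed

text \<open>Together with S_A(x0, x0) \<le> 0 this places x0 in the Aubry set.\<close>

lemma I_F_zero_imp_aubry: "x0 \<in> aubry d lam A"
proof -
  have "(INF e\<in>{0<..}. mane_approx x0 e) = 0"
  proof (rule antisym)
    show "0 \<le> (INF e\<in>{0<..}. mane_approx x0 e)" using mane_approx_x0_nonneg by (intro INF_greatest) auto
    show "(INF e\<in>{0<..}. mane_approx x0 e) \<le> 0"
    proof (rule ereal_le_epsilon2)
      fix e :: real assume "0 < e"
      then obtain K where K: "W K < e" using W_small by blast
      have "(INF e\<in>{0<..}. mane_approx x0 e) \<le> mane_approx x0 (lam ^ K)" using lam0 by (intro INF_lower) auto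
      also have "\<dots> \<le> ereal (W K)" by (rule mane_approx_le[OF x0])
      also have "\<dots> \<le> 0 + ereal e" using K by simp
      finally show "(INF e\<in>{0<..}. mane_approx x0 e) \<le> 0 + ereal e" .
    qed
  qed
  thus ?thesis using x0 mane_eq_INF_approx by (simp add: aubry_def)
qed

end

end

text \<open>Over the empty alphabet both sides are empty; otherwise the two inclusions
  are aubry_imp_I_F_zero and I_F_zero_imp_aubry.\<close>

theorem mainTheorem14:
  fixes d :: nat and lam \<alpha> :: real and A :: "(nat \<Rightarrow> nat) \<Rightarrow> real"
  assumes "0 < lam" and "lam < 1" and "0 < \<alpha>"
    and "holderS d lam \<alpha> A"
  shows "aubry d lam A =
    {x\<in>SigmaS d. \<forall>F\<in>subactions_S d lam \<alpha> A. I_F d lam A F x = 0}"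
proof (cases "d = 0")
  case True
  hence "SigmaS d = {}" by (auto simp: SigmaS_def)
  thus ?thesis by (auto simp: aubry_def)
next
  case False
  interpret holder_potential d lam \<alpha> A using assms False by unfold_locales auto
  show ?thesis
    using aubry_imp_I_F_zero I_F_zero_imp_aubry by (auto simp: aubry_def)
qed

end
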